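(* For every $n\ge1$ and $d\ge1$ there is a quantum circuit (a unitary circuit on the input together with ancilla registers, some of which are traced out at the end) implementing a channel $\mathcal{C}^{(n)}$ such that for every pure state $\ket\psi\in\mathbb{C}^d$, $$\mathcal{C}^{(n)}\big(\ket\psi\bra\psi^{\otimes n}\big)=\mathbb{E}_{\theta\sim[0,2\pi)}\,\ket{\psi(\theta)}\bra{\psi(\theta)}^{\otimes n},$$ where $\theta$ is uniform on $[0,2\pi)$. Moreover this circuit has gate complexity $O(n^2\log d)$.
   Context: For $\ket\psi\in\mathbb{C}^d$ and $\theta\in[0,2\pi)$, the conditional sample is $\ket{\psi(\theta)}=\frac1{\sqrt2}\big(e^{i\theta}\ket0\ket0+\ket1\ket\psi\big)\in\mathbb{C}^2\otimes\mathbb{C}^d$. *)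

theory Defs
  imports "HOL-Analysis.Analysis"
begin

text \<open>Qubit circuit model. An m-qubit register has state space C^(2^m); basis index
  x < 2^m, qubit j being bit j of x. Operators are complex functions on index pairs.\<close>

definition bv :: "nat \<Rightarrow> nat \<Rightarrow> nat" where
  "bv x j = (if bit x j then 1 else 0)"

text \<open>A gate is an arbitrary two-qubit unitary U (4x4, basis index bv a + 2 * bv b)
  acting on two distinct qubits a, b.\<close>
type_synonym gate = "(nat \<Rightarrow> nat \<Rightarrow> complex) \<times> nat \<times> nat"

definition unitary4 :: "(nat \<Rightarrow> nat \<Rightarrow> complex) \<Rightarrow> bool" where
  "unitary4 U \<longleftrightarrow> (\<forall>i<4. \<forall>j<4. (\<Sum>l<4. U i l * cnj (U j l)) = (if i = j then 1 else 0))"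

definition valid_gate :: "nat \<Rightarrow> gate \<Rightarrow> bool" where
  "valid_gate m g \<longleftrightarrow> (case g of (U, a, b) \<Rightarrow> unitary4 U \<and> a < m \<and> b < m \<and> a \<noteq> b)"

definition gate_mat :: "nat \<Rightarrow> gate \<Rightarrow> nat \<Rightarrow> nat \<Rightarrow> complex" where
  "gate_mat m g x y = (case g of (U, a, b) \<Rightarrow>
     (if (\<forall>j<m. j \<noteq> a \<and> j \<noteq> b \<longrightarrow> bit x j = bit y j)
      then U (bv x a + 2 * bv x b) (bv y a + 2 * bv y b) else 0))"

definition conj_op :: "nat \<Rightarrow> (nat \<Rightarrow> nat \<Rightarrow> complex) \<Rightarrow> (nat \<Rightarrow> nat \<Rightarrow> complex)
    \<Rightarrow> nat \<Rightarrow> nat \<Rightarrow> complex" where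
  "conj_op N G \<rho> x y = (\<Sum>l<N. \<Sum>l'<N. G x l * \<rho> l l' * cnj (G y l'))"

text \<open>Run the gates in list order (first gate of the list is applied first).\<close>
fun evolve :: "nat \<Rightarrow> gate list \<Rightarrow> (nat \<Rightarrow> nat \<Rightarrow> complex) \<Rightarrow> nat \<Rightarrow> nat \<Rightarrow> complex" where
  "evolve m [] \<rho> = \<rho>"
| "evolve m (g # gs) \<rho> = evolve m gs (conj_op (2 ^ m) (gate_mat m g) \<rho>)"

text \<open>Channel of a circuit on m qubits: the input (k_in qubits) occupies qubits 0..<k_in,
  the ancilla qubits k_in..<m start in |0>, the unitary circuit is applied, and the qubits
  k_out..<m are traced out; the output lives on qubits 0..<k_out.\<close>
definition circuit_channel :: "nat \<Rightarrow> gate list \<Rightarrow> nat \<Rightarrow> nat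
    \<Rightarrow> (nat \<Rightarrow> nat \<Rightarrow> complex) \<Rightarrow> nat \<Rightarrow> nat \<Rightarrow> complex" where
  "circuit_channel m gs k_in k_out \<rho> a b =
     (let \<rho>0 = (\<lambda>x y. if x < 2 ^ k_in \<and> y < 2 ^ k_in then \<rho> x y else 0);
          \<sigma> = evolve m gs \<rho>0
      in (\<Sum>t<2 ^ (m - k_out). \<sigma> (a + 2 ^ k_out * t) (b + 2 ^ k_out * t)))"

text \<open>Number of qubits used to encode C^d: least k with d \<le> 2^k (C^d is embedded as the
  span of the first d basis states).\<close>
definition qbits :: "nat \<Rightarrow> nat" where
  "qbits d = (LEAST k. d \<le> 2 ^ k)"

definition ext_vec :: "nat \<Rightarrow> (nat \<Rightarrow> complex) \<Rightarrow> nat \<Rightarrow> complex" where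
  "ext_vec d \<psi> j = (if j < d then \<psi> j else 0)"

definition blk :: "nat \<Rightarrow> nat \<Rightarrow> nat \<Rightarrow> nat" where
  "blk s i z = (z div 2 ^ (i * s)) mod 2 ^ s"

text \<open>|psi><psi|^{\<otimes>n}, copy i on qubits i*k..<(i+1)*k, k = qbits d.\<close>
definition input_state :: "nat \<Rightarrow> nat \<Rightarrow> (nat \<Rightarrow> complex) \<Rightarrow> nat \<Rightarrow> nat \<Rightarrow> complex" where
  "input_state n d \<psi> z w =
     (\<Prod>i<n. ext_vec d \<psi> (blk (qbits d) i z)) * cnj (\<Prod>i<n. ext_vec d \<psi> (blk (qbits d) i w))"

text \<open>|psi(theta)> = (e^{i theta}|0>|0> + |1>|psi>)/sqrt 2 in C^2 \<otimes> C^d, encoded on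
  1 + qbits d qubits: the C^2 factor is the lowest qubit c mod 2, the C^d factor is c div 2.\<close>
definition cond_sample :: "nat \<Rightarrow> (nat \<Rightarrow> complex) \<Rightarrow> real \<Rightarrow> nat \<Rightarrow> complex" where
  "cond_sample d \<psi> \<theta> c =
     (if c mod 2 = 0 then (if c div 2 = 0 then exp (\<i> * of_real \<theta>) else 0)
      else ext_vec d \<psi> (c div 2)) / of_real (sqrt 2)"

text \<open>E_theta |psi(theta)><psi(theta)|^{\<otimes>n}, theta uniform on [0, 2 pi);
  copy i on qubits i*(k+1)..<(i+1)*(k+1).\<close>
definition target_state :: "nat \<Rightarrow> nat \<Rightarrow> (nat \<Rightarrow> complex) \<Rightarrow> nat \<Rightarrow> nat \<Rightarrow> complex" where
  "target_state n d \<psi> z w =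
     integral {0..2 * pi} (\<lambda>\<theta>.
        (\<Prod>i<n. cond_sample d \<psi> \<theta> (blk (qbits d + 1) i z))
        * cnj (\<Prod>i<n. cond_sample d \<psi> \<theta> (blk (qbits d + 1) i w))) / of_real (2 * pi)"

end

theory Submission
  imports Defs
begin

text \<open>
  The circuit works on \<open>2 * n\<close> registers of \<open>k + 1\<close> qubits, each holding the \<open>\<bbbC>\<^sup>2\<close> flag and a
  copy of \<open>\<bbbC>\<^sup>d\<close>, and on \<open>n\<close> control qubits. It prepares \<open>|0\<rangle>|0\<rangle>\<close> in registers \<open>j < n\<close>,
  \<open>|1\<rangle>|\<psi>\<rangle>\<close> in the other \<open>n\<close> registers (moving the input copies there) and \<open>|+\<rangle>\<close> on every
  control. Step \<open>i\<close> rotates registers \<open>i, ..., 2 * n - 1\<close> by one position, controlled by control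
  \<open>i\<close>, which brings a \<open>|1\<rangle>|\<psi>\<rangle>\<close> register to position \<open>i\<close>. Afterwards output register \<open>i\<close>
  holds \<open>|1\<rangle>|\<psi>\<rangle>\<close> exactly when control \<open>i\<close> is set, and the remaining registers are sorted; so
  each control equals the flag of its output register and is uncomputed by a CNOT.

  For an output string with \<open>A\<close> registers in \<open>|1\<rangle>|\<psi>\<rangle>\<close> the discarded qubits are left in a
  state \<open>|G_A\<rangle>\<close> that depends only on \<open>A\<close>, and these states are orthonormal. Tracing them out
  therefore makes the output block diagonal in \<open>A\<close>, which is exactly what averaging over \<open>\<theta>\<close>
  does, since every \<open>|0\<rangle>|0\<rangle>\<close> register of \<open>|\<psi>(\<theta>)\<rangle>\<close> carries the phase \<open>e^(i\<theta>)\<close>.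
  Every rotation consists of at most \<open>2 * n * (k + 1)\<close> Fredkin gates of nine two-qubit gates each,
  so the circuit has \<open>O(n\<^sup>2 k) = O(n\<^sup>2 log d)\<close> gates.
\<close>

lemma less_power2_iff_no_bit_above: "(x::nat) < 2 ^ m \<longleftrightarrow> (\<forall>p\<ge>m. \<not> bit x p)"
proof
  assume "x < 2 ^ m"
  then show "\<forall>p\<ge>m. \<not> bit x p"
    by (metis bit_take_bit_iff leD take_bit_nat_eq_self)
next
  assume "\<forall>p\<ge>m. \<not> bit x p"
  then have "take_bit m x = x"
    by (intro bit_eqI) (auto simp: bit_take_bit_iff not_le)
  then show "x < 2 ^ m"
    by (simp add: take_bit_nat_eq_self_iff)
qed

definition put_bit :: "nat \<Rightarrow> bool \<Rightarrow> nat \<Rightarrow> nat" where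
  "put_bit a p x = (if p then set_bit a x else unset_bit a x)"

lemma bit_put_bit: "bit (put_bit a p x) j \<longleftrightarrow> (if j = a then p else bit x j)"
  by (auto simp: put_bit_def bit_set_bit_iff bit_unset_bit_iff)

lemma put_bit_eq_self: "bit x a = p \<Longrightarrow> put_bit a p x = x"
  by (rule bit_eqI) (auto simp: bit_put_bit)

lemma put_bit_put_bit_same [simp]: "put_bit a p (put_bit a q x) = put_bit a p x"
  by (rule bit_eqI) (simp add: bit_put_bit)

lemma put_bit_less: "x < 2 ^ m \<Longrightarrow> a < m \<Longrightarrow> put_bit a p x < 2 ^ m"
  by (auto simp: less_power2_iff_no_bit_above bit_put_bit)

lemma bv_put_bit: "bv (put_bit a p x) j = (if j = a then of_bool p else bv x j)"
  by (simp add: bv_def bit_put_bit)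


section \<open>Pure states\<close>

text \<open>On a rank-one input the channel of a circuit is determined by its action on the state
  vector, so the whole development works with vectors.\<close>

definition gate_apply :: "nat \<Rightarrow> gate \<Rightarrow> (nat \<Rightarrow> complex) \<Rightarrow> nat \<Rightarrow> complex" where
  "gate_apply m g v x = (\<Sum>l<2 ^ m. gate_mat m g x l * v l)"

fun run_circuit :: "nat \<Rightarrow> gate list \<Rightarrow> (nat \<Rightarrow> complex) \<Rightarrow> nat \<Rightarrow> complex" where
  "run_circuit m [] v = v"
| "run_circuit m (g # gs) v = run_circuit m gs (gate_apply m g v)"

lemma run_circuit_append: "run_circuit m (gs @ hs) v = run_circuit m hs (run_circuit m gs v)"
  by (induction gs arbitrary: v) auto

lemma run_circuit_cong:
  "(\<And>y. y < 2 ^ m \<Longrightarrow> v y = w y) \<Longrightarrow> x < 2 ^ m \<Longrightarrow> run_circuit m gs v x = run_circuit m gs w x"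
proof (induction gs arbitrary: v w)
  case (Cons g gs)
  have "gate_apply m g v y = gate_apply m g w y" if "y < 2 ^ m" for y
    using Cons.prems by (auto simp: gate_apply_def intro!: sum.cong)
  then show ?case
    unfolding run_circuit.simps using Cons.prems(2) by (rule Cons.IH)
qed simp

lemma evolve_outer_product:
  "evolve m gs (\<lambda>x y. v x * cnj (v y)) = (\<lambda>x y. run_circuit m gs v x * cnj (run_circuit m gs v y))"
proof (induction gs arbitrary: v)
  case Nil
  then show ?case by simp
next
  case (Cons g gs)
  have "conj_op (2 ^ m) (gate_mat m g) (\<lambda>x y. v x * cnj (v y))
      = (\<lambda>x y. gate_apply m g v x * cnj (gate_apply m g v y))"
    by (auto simp: conj_op_def gate_apply_def sum_product cnj_sum mult_ac intro!: ext sum.cong)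
  with Cons show ?case by simp
qed

lemma inj_put_bit_pair:
  assumes "a \<noteq> b"
  shows "inj (\<lambda>(p, q). put_bit b q (put_bit a p x))" (is "inj ?y")
proof (rule injI)
  fix u w assume "?y u = ?y w"
  then have "bit (?y u) a = bit (?y w) a" "bit (?y u) b = bit (?y w) b"
    by auto
  then show "u = w"
    using assms by (cases u; cases w) (auto simp: bit_put_bit)
qed

lemma range_put_bit_pair:
  assumes x: "x < 2 ^ m" and ab: "a < m" "b < m" "a \<noteq> b"
  shows "range (\<lambda>(p, q). put_bit b q (put_bit a p x)) =
    {l. l < 2 ^ m \<and> (\<forall>j<m. j \<noteq> a \<and> j \<noteq> b \<longrightarrow> bit x j = bit l j)}" (is "range ?y = ?S")
proof
  show "range ?y \<subseteq> ?S"
    using x ab by (auto simp: bit_put_bit intro!: put_bit_less)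
  show "?S \<subseteq> range ?y"
  proof
    fix l assume l: "l \<in> ?S"
    have "l = ?y (bit l a, bit l b)"
    proof (rule bit_eqI)
      fix j
      show "bit l j = bit (?y (bit l a, bit l b)) j"
      proof (cases "j < m")
        case True
        then show ?thesis using l by (auto simp: bit_put_bit)
      next
        case False
        then have "\<not> bit l j" "\<not> bit x j"
          using l x by (auto simp: less_power2_iff_no_bit_above)
        then show ?thesis using ab False by (auto simp: bit_put_bit)
      qed
    qed
    then show "l \<in> range ?y" by blast
  qed
qed

lemma gate_apply_eq_sum_bits:
  assumes "x < 2 ^ m" "a < m" "b < m" "a \<noteq> b"
  shows "gate_apply m (U, a, b) v x = (\<Sum>p\<in>UNIV. \<Sum>q\<in>UNIV.
           U (bv x a + 2 * bv x b) (of_bool p + 2 * of_bool q) * v (put_bit b q (put_bit a p x)))"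
proof -
  let ?y = "\<lambda>(p, q). put_bit b q (put_bit a p x)"
  have "gate_apply m (U, a, b) v x = (\<Sum>l\<in>range ?y. gate_mat m (U, a, b) x l * v l)"
    unfolding gate_apply_def range_put_bit_pair[OF assms]
    by (rule sum.mono_neutral_right) (auto simp: gate_mat_def)
  also have "\<dots> = (\<Sum>u\<in>UNIV. gate_mat m (U, a, b) x (?y u) * v (?y u))"
    using inj_put_bit_pair[OF assms(4)] by (simp add: sum.reindex)
  also have "\<dots> = (\<Sum>u\<in>UNIV. U (bv x a + 2 * bv x b) (of_bool (fst u) + 2 * of_bool (snd u)) * v (?y u))"
    using assms by (intro sum.cong refl)
      (clarsimp simp: gate_mat_def bit_put_bit bv_put_bit numeral_3_eq_3 numeral_2_eq_2)
  finally show ?thesis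
    by (simp add: sum.cartesian_product case_prod_beta)
qed


section \<open>Gates\<close>

lemma all_less_4: "(\<forall>i<4. P i) \<longleftrightarrow> P 0 \<and> P 1 \<and> P 2 \<and> P (3::nat)"
  by (auto simp: numeral_eq_Suc less_Suc_eq)

lemma sum_less_4: "(\<Sum>l<(4::nat). f l) = f 0 + f 1 + f 2 + f 3"
  by (simp add: numeral_eq_Suc)

text \<open>The permutation matrix of the reversible map on two bits with components \<open>P\<close> and \<open>Q\<close>:
  the new amplitude of \<open>|p q\<rangle>\<close> is the old amplitude of \<open>|P p q, Q p q\<rangle>\<close>.\<close>

definition classical_gate :: "(bool \<Rightarrow> bool \<Rightarrow> bool) \<Rightarrow> (bool \<Rightarrow> bool \<Rightarrow> bool) \<Rightarrow> nat \<Rightarrow> nat \<Rightarrow> complex"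
  where "classical_gate P Q r s =
    of_bool (s = of_bool (P (odd r) (r div 2 = 1)) + 2 * of_bool (Q (odd r) (r div 2 = 1)))"

definition classical_map :: "(bool \<Rightarrow> bool \<Rightarrow> bool) \<Rightarrow> (bool \<Rightarrow> bool \<Rightarrow> bool) \<Rightarrow> nat \<Rightarrow> nat \<Rightarrow> nat \<Rightarrow> nat"
  where "classical_map P Q a b x = put_bit b (Q (bit x a) (bit x b)) (put_bit a (P (bit x a) (bit x b)) x)"

lemma of_bool_pair_eq_iff:
  "((of_bool p + 2 * of_bool q :: nat) = of_bool p' + 2 * of_bool q') \<longleftrightarrow> p = p' \<and> q = q'"
  by (cases p; cases q; cases p'; cases q') auto

lemma gate_apply_classical_gate:
  assumes "x < 2 ^ m" "a < m" "b < m" "a \<noteq> b"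
  shows "gate_apply m (classical_gate P Q, a, b) v x = v (classical_map P Q a b x)"
  unfolding gate_apply_eq_sum_bits[OF assms] classical_gate_def of_bool_pair_eq_iff
  by (cases "P (bit x a) (bit x b)"; cases "Q (bit x a) (bit x b)")
    (auto simp: UNIV_bool classical_map_def bv_def)

definition "X_gate = classical_gate (\<lambda>p q. \<not> p) (\<lambda>p q. q)"
definition "CNOT_gate = classical_gate (\<lambda>p q. p \<noteq> q) (\<lambda>p q. q)"
definition "SWAP_gate = classical_gate (\<lambda>p q. q) (\<lambda>p q. p)"

lemma unitary_X_gate: "unitary4 X_gate"
  unfolding unitary4_def all_less_4 sum_less_4 X_gate_def classical_gate_def by simp

lemma unitary_CNOT_gate: "unitary4 CNOT_gate"
  unfolding unitary4_def all_less_4 sum_less_4 CNOT_gate_def classical_gate_def by simp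

lemma unitary_SWAP_gate: "unitary4 SWAP_gate"
  unfolding unitary4_def all_less_4 sum_less_4 SWAP_gate_def classical_gate_def by simp

definition inv_sqrt2 :: complex where "inv_sqrt2 = 1 / of_real (sqrt 2)"

lemma inv_sqrt2_square: "inv_sqrt2 * inv_sqrt2 = 1 / 2"
proof -
  have "complex_of_real (sqrt 2) * complex_of_real (sqrt 2) = 2"
    by (simp flip: of_real_mult)
  then show ?thesis unfolding inv_sqrt2_def by (simp add: field_simps)
qed

lemma inv_sqrt2_mult_inv_sqrt2: "inv_sqrt2 * (inv_sqrt2 * z) = z / 2"
  by (simp add: mult.assoc[symmetric] inv_sqrt2_square)

lemma cnj_inv_sqrt2 [simp]: "cnj inv_sqrt2 = inv_sqrt2"
  by (simp add: inv_sqrt2_def)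

text \<open>Hadamard on the first of the two qubits; the second one is a spectator.\<close>

definition hadamard_gate :: "nat \<Rightarrow> nat \<Rightarrow> complex" where
  "hadamard_gate r s =
     (if r div 2 = s div 2 then (if odd r \<and> odd s then - inv_sqrt2 else inv_sqrt2) else 0)"

definition cphase_gate :: "complex \<Rightarrow> nat \<Rightarrow> nat \<Rightarrow> complex" where
  "cphase_gate w r s = (if r = s then (if r = 3 then w else 1) else 0)"

lemma unitary_hadamard_gate: "unitary4 hadamard_gate"
  unfolding unitary4_def all_less_4 sum_less_4 hadamard_gate_def by (simp add: inv_sqrt2_square)

lemma unitary_cphase_gate: "unitary4 (cphase_gate \<i>)" "unitary4 (cphase_gate (- \<i>))"
  unfolding unitary4_def all_less_4 sum_less_4 cphase_gate_def by simp_all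

lemma gate_apply_hadamard_gate:
  assumes "x < 2 ^ m" "a < m" "b < m" "a \<noteq> b"
  shows "gate_apply m (hadamard_gate, a, b) v x =
    inv_sqrt2 * v (put_bit a False x) + (if bit x a then - inv_sqrt2 else inv_sqrt2) * v (put_bit a True x)"
  unfolding gate_apply_eq_sum_bits[OF assms] hadamard_gate_def
  using assms(4) by (cases "bit x a"; cases "bit x b") (auto simp: UNIV_bool bv_def put_bit_eq_self bit_put_bit)

lemma gate_apply_cphase_gate:
  assumes "x < 2 ^ m" "a < m" "b < m" "a \<noteq> b"
  shows "gate_apply m (cphase_gate w, a, b) v x = (if bit x a \<and> bit x b then w else 1) * v x"
  unfolding gate_apply_eq_sum_bits[OF assms] cphase_gate_def
  using assms(4) by (cases "bit x a"; cases "bit x b") (auto simp: UNIV_bool bv_def put_bit_eq_self bit_put_bit)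


section \<open>Classical reversible circuits\<close>

text \<open>\<open>f\<close> is the inverse of the permutation of basis states performed by \<open>gs\<close>:
  the amplitude of \<open>x\<close> after the circuit is the amplitude of \<open>f x\<close> before it.
  Consequently maps compose in reverse order.\<close>

definition classical_circuit :: "nat \<Rightarrow> gate list \<Rightarrow> (nat \<Rightarrow> nat) \<Rightarrow> bool" where
  "classical_circuit m gs f \<longleftrightarrow> (\<forall>x<2 ^ m. f x < 2 ^ m \<and> (\<forall>v. run_circuit m gs v x = v (f x)))"

lemma classical_circuit_Nil: "classical_circuit m [] (\<lambda>x. x)"
  by (simp add: classical_circuit_def)

lemma classical_circuit_append:
  "classical_circuit m gs f \<Longrightarrow> classical_circuit m hs g \<Longrightarrow> classical_circuit m (gs @ hs) (\<lambda>x. f (g x))"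
  by (simp add: classical_circuit_def run_circuit_append)

lemma classical_circuit_cong:
  "classical_circuit m gs f \<Longrightarrow> (\<And>x. x < 2 ^ m \<Longrightarrow> f x = g x) \<Longrightarrow> classical_circuit m gs g"
  by (simp add: classical_circuit_def)

lemma classical_circuit_classical_gate:
  "a < m \<Longrightarrow> b < m \<Longrightarrow> a \<noteq> b \<Longrightarrow> classical_circuit m [(classical_gate P Q, a, b)] (classical_map P Q a b)"
  by (simp add: classical_circuit_def gate_apply_classical_gate classical_map_def put_bit_less)

definition valid_circuit :: "nat \<Rightarrow> gate list \<Rightarrow> bool" where
  "valid_circuit m gs \<longleftrightarrow> (\<forall>g\<in>set gs. valid_gate m g)"

lemma valid_circuit_simps [simp]:
  "valid_circuit m []"
  "valid_circuit m (g # gs) \<longleftrightarrow> valid_gate m g \<and> valid_circuit m gs"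
  "valid_circuit m (gs @ hs) \<longleftrightarrow> valid_circuit m gs \<and> valid_circuit m hs"
  by (auto simp: valid_circuit_def)

lemma valid_circuit_concat_map:
  "valid_circuit m (concat (map f xs)) \<longleftrightarrow> (\<forall>x\<in>set xs. valid_circuit m (f x))"
  by (auto simp: valid_circuit_def)

text \<open>The phase is \<open>\<i>^(pq) (-\<i>)^((p xor c) q) \<i>^(cq) = \<i>^(2pcq)\<close>.\<close>

definition ccz_circuit :: "nat \<Rightarrow> nat \<Rightarrow> nat \<Rightarrow> gate list" where
  "ccz_circuit c p q = [(cphase_gate \<i>, p, q), (CNOT_gate, p, c), (cphase_gate (- \<i>), p, q),
     (CNOT_gate, p, c), (cphase_gate \<i>, c, q)]"

lemma run_ccz_circuit:
  assumes "x < 2 ^ m" "c < m" "p < m" "q < m" "c \<noteq> p" "c \<noteq> q" "p \<noteq> q"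
  shows "run_circuit m (ccz_circuit c p q) v x = (if bit x c \<and> bit x p \<and> bit x q then -1 else 1) * v x"
  using assms
  by (cases "bit x c"; cases "bit x p"; cases "bit x q")
    (simp_all add: ccz_circuit_def gate_apply_cphase_gate gate_apply_classical_gate CNOT_gate_def
      classical_map_def bit_put_bit put_bit_less put_bit_eq_self)

definition toffoli_circuit :: "nat \<Rightarrow> nat \<Rightarrow> nat \<Rightarrow> gate list" where
  "toffoli_circuit c p q = [(hadamard_gate, q, p)] @ ccz_circuit c p q @ [(hadamard_gate, q, p)]"

lemma classical_circuit_toffoli:
  assumes "c < m" "p < m" "q < m" "c \<noteq> p" "c \<noteq> q" "p \<noteq> q"
  shows "classical_circuit m (toffoli_circuit c p q) (\<lambda>x. put_bit q (bit x q \<noteq> (bit x c \<and> bit x p)) x)"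
  unfolding classical_circuit_def
proof (intro allI impI conjI)
  fix v x assume x: "x < (2::nat) ^ m"
  show "run_circuit m (toffoli_circuit c p q) v x = v (put_bit q (bit x q \<noteq> (bit x c \<and> bit x p)) x)"
    using assms x
    by (cases "bit x c"; cases "bit x p"; cases "bit x q")
      (simp_all add: toffoli_circuit_def run_circuit_append run_ccz_circuit gate_apply_hadamard_gate
        put_bit_less bit_put_bit put_bit_eq_self inv_sqrt2_mult_inv_sqrt2 field_simps)
qed (use assms in \<open>simp add: put_bit_less\<close>)

definition fredkin_circuit :: "nat \<Rightarrow> nat \<Rightarrow> nat \<Rightarrow> gate list" where
  "fredkin_circuit c p q = [(CNOT_gate, p, q)] @ toffoli_circuit c p q @ [(CNOT_gate, p, q)]"

definition fredkin_map :: "nat \<Rightarrow> nat \<Rightarrow> nat \<Rightarrow> nat \<Rightarrow> nat" where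
  "fredkin_map c p q x = (if bit x c then put_bit q (bit x p) (put_bit p (bit x q) x) else x)"

lemma bit_fredkin_map:
  "c \<noteq> p \<Longrightarrow> c \<noteq> q \<Longrightarrow> p \<noteq> q \<Longrightarrow> bit (fredkin_map c p q x) r \<longleftrightarrow>
    (if bit x c \<and> r = p then bit x q else if bit x c \<and> r = q then bit x p else bit x r)"
  by (auto simp: fredkin_map_def bit_put_bit)

lemma classical_circuit_fredkin:
  assumes "c < m" "p < m" "q < m" "c \<noteq> p" "c \<noteq> q" "p \<noteq> q"
  shows "classical_circuit m (fredkin_circuit c p q) (fredkin_map c p q)"
proof -
  let ?cnot = "classical_map (\<lambda>a b. a \<noteq> b) (\<lambda>a b. b) p q"
  have "classical_circuit m (fredkin_circuit c p q)
      (\<lambda>x. ?cnot (put_bit q (bit (?cnot x) q \<noteq> (bit (?cnot x) c \<and> bit (?cnot x) p)) (?cnot x)))"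
    unfolding fredkin_circuit_def CNOT_gate_def
    using assms by (intro classical_circuit_append classical_circuit_classical_gate classical_circuit_toffoli)
  then show ?thesis
    by (rule classical_circuit_cong)
      (rule bit_eqI, use assms in \<open>auto simp: classical_map_def bit_put_bit bit_fredkin_map\<close>)
qed

lemma valid_fredkin_circuit:
  "c < m \<Longrightarrow> p < m \<Longrightarrow> q < m \<Longrightarrow> c \<noteq> p \<Longrightarrow> c \<noteq> q \<Longrightarrow> p \<noteq> q \<Longrightarrow> valid_circuit m (fredkin_circuit c p q)"
  by (simp add: fredkin_circuit_def toffoli_circuit_def ccz_circuit_def valid_gate_def
      unitary_CNOT_gate unitary_hadamard_gate unitary_cphase_gate)

lemma length_fredkin_circuit: "length (fredkin_circuit c p q) = 9"
  by (simp add: fredkin_circuit_def toffoli_circuit_def ccz_circuit_def)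


section \<open>A layer of Hadamard gates\<close>

primrec clear_bits :: "nat list \<Rightarrow> nat \<Rightarrow> nat" where
  "clear_bits [] x = x"
| "clear_bits (c # cs) x = put_bit c False (clear_bits cs x)"

lemma bit_clear_bits: "bit (clear_bits cs x) p \<longleftrightarrow> bit x p \<and> p \<notin> set cs"
  by (induction cs) (auto simp: bit_put_bit)

definition hadamard_circuit :: "nat list \<Rightarrow> gate list" where
  "hadamard_circuit cs = map (\<lambda>c. (hadamard_gate, c, 0)) cs"

lemma valid_hadamard_circuit:
  "\<forall>c\<in>set cs. 0 < c \<and> c < m \<Longrightarrow> valid_circuit m (hadamard_circuit cs)"
  by (auto simp: hadamard_circuit_def valid_circuit_def valid_gate_def unitary_hadamard_gate)

lemma gate_apply_hadamard_gate_idle: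
  assumes "y < 2 ^ m" "0 < c" "c < m" and idle: "\<And>z. z < 2 ^ m \<Longrightarrow> bit z c \<Longrightarrow> v z = 0"
  shows "gate_apply m (hadamard_gate, c, 0) v y = inv_sqrt2 * v (put_bit c False y)"
proof -
  have "v (put_bit c True y) = 0"
    using assms by (intro idle) (auto simp: put_bit_less bit_put_bit)
  then show ?thesis
    using assms by (simp add: gate_apply_hadamard_gate)
qed

lemma run_hadamard_circuit:
  assumes "distinct cs" "\<forall>c\<in>set cs. 0 < c \<and> c < m"
    and "\<And>y c. y < 2 ^ m \<Longrightarrow> c \<in> set cs \<Longrightarrow> bit y c \<Longrightarrow> v y = 0"
    and "x < 2 ^ m"
  shows "run_circuit m (hadamard_circuit cs) v x = inv_sqrt2 ^ length cs * v (clear_bits cs x)"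
  using assms
proof (induction cs arbitrary: v)
  case Nil
  then show ?case by (simp add: hadamard_circuit_def)
next
  case (Cons c cs)
  define w where "w y = inv_sqrt2 * v (put_bit c False y)" for y
  have "run_circuit m (hadamard_circuit (c # cs)) v x
      = run_circuit m (hadamard_circuit cs) (gate_apply m (hadamard_gate, c, 0) v) x"
    by (simp add: hadamard_circuit_def)
  also have "\<dots> = run_circuit m (hadamard_circuit cs) w x"
    using Cons.prems by (intro run_circuit_cong) (auto simp: w_def intro!: gate_apply_hadamard_gate_idle)
  also have "\<dots> = inv_sqrt2 ^ length cs * w (clear_bits cs x)"
  proof (rule Cons.IH)
    show "w y = 0" if "y < 2 ^ m" "c' \<in> set cs" "bit y c'" for y c'
    proof -
      have "bit (put_bit c False y) c'"
        using Cons.prems(1) that(2,3) by (auto simp: bit_put_bit)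
      moreover have "put_bit c False y < 2 ^ m"
        using that(1) Cons.prems(2) by (simp add: put_bit_less)
      ultimately have "v (put_bit c False y) = 0"
        using Cons.prems(3) that(2) by (meson list.set_intros(2))
      then show ?thesis
        by (simp add: w_def)
    qed
  qed (use Cons.prems in auto)
  finally show ?case
    by (simp add: w_def)
qed


section \<open>Swapping and rotating blocks of qubits\<close>

primrec swap_bits :: "nat \<Rightarrow> nat \<Rightarrow> nat \<Rightarrow> nat \<Rightarrow> nat" where
  "swap_bits P Q 0 x = x"
| "swap_bits P Q (Suc L) x = swap_bits P Q L (classical_map (\<lambda>p q. q) (\<lambda>p q. p) (P + L) (Q + L) x)"

lemma bit_swap_bits:
  assumes "P + L \<le> Q"
  shows "bit (swap_bits P Q L x) r \<longleftrightarrow> (if P \<le> r \<and> r < P + L then bit x (r - P + Q)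
           else if Q \<le> r \<and> r < Q + L then bit x (r - Q + P) else bit x r)"
  using assms
  by (induction L arbitrary: x) (auto simp: classical_map_def bit_put_bit)

definition swap_bits_circuit :: "nat \<Rightarrow> nat \<Rightarrow> nat \<Rightarrow> gate list" where
  "swap_bits_circuit P Q L = map (\<lambda>t. (SWAP_gate, P + t, Q + t)) [0..<L]"

lemma classical_circuit_swap_bits:
  assumes "P + L \<le> Q" "Q + L \<le> m"
  shows "classical_circuit m (swap_bits_circuit P Q L) (swap_bits P Q L)"
  using assms
proof (induction L)
  case 0
  then show ?case by (simp add: swap_bits_circuit_def classical_circuit_Nil)
next
  case (Suc L)
  have "swap_bits_circuit P Q (Suc L) = swap_bits_circuit P Q L @ [(SWAP_gate, P + L, Q + L)]"
    by (simp add: swap_bits_circuit_def)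
  moreover have "classical_circuit m [(SWAP_gate, P + L, Q + L)] (classical_map (\<lambda>p q. q) (\<lambda>p q. p) (P + L) (Q + L))"
    using Suc.prems unfolding SWAP_gate_def by (intro classical_circuit_classical_gate) auto
  ultimately show ?case
    using classical_circuit_append Suc by simp
qed

lemma valid_swap_bits_circuit:
  "P + L \<le> Q \<Longrightarrow> Q + L \<le> m \<Longrightarrow> valid_circuit m (swap_bits_circuit P Q L)"
  by (auto simp: swap_bits_circuit_def valid_circuit_def valid_gate_def unitary_SWAP_gate)

definition cswap_bits_circuit :: "nat \<Rightarrow> nat \<Rightarrow> nat \<Rightarrow> nat \<Rightarrow> gate list" where
  "cswap_bits_circuit c P Q L = concat (map (\<lambda>t. fredkin_circuit c (P + t) (Q + t)) [0..<L])"

lemma classical_circuit_cswap_bits: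
  assumes "P + L \<le> Q" "Q + L \<le> c" "c < m"
  shows "classical_circuit m (cswap_bits_circuit c P Q L) (\<lambda>x. if bit x c then swap_bits P Q L x else x)"
  using assms
proof (induction L)
  case 0
  then show ?case by (simp add: cswap_bits_circuit_def classical_circuit_def)
next
  case (Suc L)
  have "cswap_bits_circuit c P Q (Suc L) = cswap_bits_circuit c P Q L @ fredkin_circuit c (P + L) (Q + L)"
    by (simp add: cswap_bits_circuit_def)
  moreover have "classical_circuit m (cswap_bits_circuit c P Q L @ fredkin_circuit c (P + L) (Q + L))
      (\<lambda>x. let y = fredkin_map c (P + L) (Q + L) x in if bit y c then swap_bits P Q L y else y)"
    using Suc unfolding Let_def
    by (intro classical_circuit_append classical_circuit_fredkin) auto
  ultimately have "classical_circuit m (cswap_bits_circuit c P Q (Suc L))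
      (\<lambda>x. let y = fredkin_map c (P + L) (Q + L) x in if bit y c then swap_bits P Q L y else y)"
    by simp
  then show ?case
    by (rule classical_circuit_cong)
      (use Suc.prems in \<open>auto simp: fredkin_map_def classical_map_def bit_put_bit\<close>)
qed

lemma valid_cswap_bits_circuit:
  "P + L \<le> Q \<Longrightarrow> Q + L \<le> c \<Longrightarrow> c < m \<Longrightarrow> valid_circuit m (cswap_bits_circuit c P Q L)"
  by (auto simp: cswap_bits_circuit_def valid_circuit_concat_map intro!: valid_fredkin_circuit)

lemma length_cswap_bits_circuit: "length (cswap_bits_circuit c P Q L) = 9 * L"
  by (induction L) (simp_all add: cswap_bits_circuit_def length_fredkin_circuit)

lemma bit_blk: "bit (blk s i z) b \<longleftrightarrow> b < s \<and> bit z (i * s + b)"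
  by (simp add: blk_def bit_take_bit_iff bit_drop_bit_eq flip: take_bit_eq_mod drop_bit_eq_div)

lemma block_position_mem_iff:
  assumes "b < (s::nat)"
  shows "i * s \<le> l * s + b \<and> l * s + b < i * s + s \<longleftrightarrow> l = i"
proof
  assume h: "i * s \<le> l * s + b \<and> l * s + b < i * s + s"
  then have "l * s < Suc i * s" "i * s < Suc l * s"
    using assms by simp_all
  then show "l = i"
    by (simp only: mult_less_cancel2) simp
qed (use assms in simp)

lemma block_position_less: "i < n \<Longrightarrow> b < k \<Longrightarrow> i * k + b < (n::nat) * k"
proof -
  assume "i < n" "b < k"
  then have "i * k + b < Suc i * k" by simp
  also have "\<dots> \<le> n * k" using \<open>i < n\<close> by (intro mult_le_mono1) simp
  finally show ?thesis .
qed

lemma block_end_le: "i < n \<Longrightarrow> i * k + k \<le> (n::nat) * k"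
  using mult_le_mono1[of "Suc i" n k] by simp

lemma block_position_cases:
  assumes "q < n * (k::nat)"
  obtains i b where "i < n" "b < k" "q = i * k + b"
proof
  show "q div k < n"
    using assms by (simp add: less_mult_imp_div_less)
  show "q mod k < k"
    using assms by (cases k) auto
  show "q = q div k * k + q mod k"
    by simp
qed

lemma prod_lessThan_add: "(\<Prod>j<n + m. f j) = (\<Prod>j<n. f j) * (\<Prod>i<m. f (n + i :: nat))"
  by (induction m) (simp_all add: mult.assoc)

lemma no_bit_below_iff_blk_eq_0: "(\<forall>q<n * s. \<not> bit x q) \<longleftrightarrow> (\<forall>j<n. blk s j x = 0)"
proof
  assume "\<forall>q<n * s. \<not> bit x q"
  then show "\<forall>j<n. blk s j x = 0"
    by (auto intro!: bit_eqI simp: bit_blk block_position_less)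
next
  assume A: "\<forall>j<n. blk s j x = 0"
  show "\<forall>q<n * s. \<not> bit x q"
  proof (intro allI impI)
    fix q assume "q < n * s"
    then obtain j b where "j < n" "b < s" "q = j * s + b"
      by (rule block_position_cases)
    then show "\<not> bit x q"
      using A bit_blk[of s j x b] by simp
  qed
qed

lemma odd_blk_Suc: "odd (blk (Suc k) j x) \<longleftrightarrow> bit x (j * Suc k)"
  using bit_blk[of "Suc k" j x 0] by (simp add: bit_0)

lemma blk_swap_bits:
  assumes "i < j"
  shows "blk s l (swap_bits (i * s) (j * s) s x) =
    (if l = i then blk s j x else if l = j then blk s i x else blk s l x)"
proof (rule bit_eqI)
  fix b
  have "i * s + s \<le> j * s"
    using assms by (rule block_end_le)
  then show "bit (blk s l (swap_bits (i * s) (j * s) s x)) b =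
      bit (if l = i then blk s j x else if l = j then blk s i x else blk s l x) b"
    by (auto simp: bit_blk bit_swap_bits block_position_mem_iff) (simp_all add: add.commute)
qed

primrec rotate_blocks :: "nat \<Rightarrow> nat \<Rightarrow> nat \<Rightarrow> nat \<Rightarrow> nat" where
  "rotate_blocks s i 0 x = x"
| "rotate_blocks s i (Suc L) x = rotate_blocks s (Suc i) L (swap_bits (i * s) (Suc i * s) s x)"

lemma blk_rotate_blocks:
  "blk s j (rotate_blocks s i L x) = (if i \<le> j \<and> j < i + L then blk s (Suc j) x
     else if j = i + L then blk s i x else blk s j x)"
proof (induction L arbitrary: i x)
  case (Suc L)
  have "blk s l (swap_bits (i * s) (Suc i * s) s x) =
      (if l = i then blk s (Suc i) x else if l = Suc i then blk s i x else blk s l x)" for l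
    by (rule blk_swap_bits) simp
  then show ?case
    by (simp only: rotate_blocks.simps Suc.IH) auto
qed simp

lemma prod_blk_rotate_blocks:
  assumes "i + L < N"
  shows "(\<Prod>j<N. f (blk s j (rotate_blocks s i L x))) = (\<Prod>j<N. f (blk s j x))"
proof -
  define \<pi> where "\<pi> j = (if i \<le> j \<and> j < i + L then Suc j else if j = i + L then i else j)" for j
  have "bij_betw \<pi> {..<N} {..<N}"
    by (rule bij_betw_byWitness[where f' = "\<lambda>j. if i < j \<and> j \<le> i + L then j - 1 else if j = i then i + L else j"])
      (use assms in \<open>auto simp: \<pi>_def\<close>)
  then have "(\<Prod>j<N. f (blk s (\<pi> j) x)) = (\<Prod>j<N. f (blk s j x))"
    by (rule prod.reindex_bij_betw)
  moreover have "blk s j (rotate_blocks s i L x) = blk s (\<pi> j) x" for j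
    by (simp add: blk_rotate_blocks \<pi>_def)
  ultimately show ?thesis
    by simp
qed

lemma bit_rotate_blocks:
  "Suc (i + L) * s \<le> c \<Longrightarrow> bit (rotate_blocks s i L x) c = bit x c"
proof (induction L arbitrary: i x)
  case (Suc L)
  then have "Suc (Suc i) * s \<le> c"
    by (intro le_trans[OF mult_le_mono1 Suc.prems(1)]) simp
  then have "bit (swap_bits (i * s) (Suc i * s) s x) c = bit x c"
    by (simp add: bit_swap_bits)
  with Suc show ?case
    by simp
qed simp

primrec crotate_blocks_circuit :: "nat \<Rightarrow> nat \<Rightarrow> nat \<Rightarrow> nat \<Rightarrow> gate list" where
  "crotate_blocks_circuit s c i 0 = []"
| "crotate_blocks_circuit s c i (Suc L) =
     crotate_blocks_circuit s c (Suc i) L @ cswap_bits_circuit c (i * s) (Suc i * s) s"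

lemma classical_circuit_crotate_blocks:
  assumes "Suc (i + L) * s \<le> c" "c < m"
  shows "classical_circuit m (crotate_blocks_circuit s c i L) (\<lambda>x. if bit x c then rotate_blocks s i L x else x)"
  using assms(1)
proof (induction L arbitrary: i)
  case 0
  then show ?case by (simp add: classical_circuit_def)
next
  case (Suc L)
  have "Suc (Suc i) * s \<le> c"
    by (intro le_trans[OF mult_le_mono1 Suc.prems(1)]) simp
  have rotate: "classical_circuit m (crotate_blocks_circuit s c (Suc i) L)
      (\<lambda>y. if bit y c then rotate_blocks s (Suc i) L y else y)"
    using Suc by simp
  have swap: "classical_circuit m (cswap_bits_circuit c (i * s) (Suc i * s) s)
      (\<lambda>x. if bit x c then swap_bits (i * s) (Suc i * s) s x else x)"
    using \<open>Suc (Suc i) * s \<le> c\<close> assms(2) by (intro classical_circuit_cswap_bits) simp_all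
  have "classical_circuit m (crotate_blocks_circuit s c i (Suc L))
      (\<lambda>x. let y = if bit x c then swap_bits (i * s) (Suc i * s) s x else x
           in if bit y c then rotate_blocks s (Suc i) L y else y)"
    using classical_circuit_append[OF rotate swap] unfolding Let_def by simp
  then show ?case
    by (rule classical_circuit_cong) (use \<open>Suc (Suc i) * s \<le> c\<close> in \<open>auto simp: bit_swap_bits\<close>)
qed

lemma valid_crotate_blocks_circuit:
  "Suc (i + L) * s \<le> c \<Longrightarrow> c < m \<Longrightarrow> valid_circuit m (crotate_blocks_circuit s c i L)"
proof (induction L arbitrary: i)
  case (Suc L)
  then have "Suc (Suc i) * s \<le> c"
    by (intro le_trans[OF mult_le_mono1 Suc.prems(1)]) simp
  with Suc show ?case
    by (auto intro!: valid_cswap_bits_circuit)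
qed simp

lemma length_crotate_blocks_circuit: "length (crotate_blocks_circuit s c i L) = 9 * L * s"
  by (induction L arbitrary: i) (simp_all add: length_cswap_bits_circuit algebra_simps)


section \<open>The sorting network\<close>

definition threshold_on :: "nat \<Rightarrow> nat \<Rightarrow> nat \<Rightarrow> (nat \<Rightarrow> bool) \<Rightarrow> bool" where
  "threshold_on i N a t \<longleftrightarrow> (\<forall>j. i \<le> j \<and> j < N \<longrightarrow> (t j \<longleftrightarrow> a \<le> j))"

lemma threshold_on_Suc_iff:
  assumes "i < a" "i < N"
  shows "threshold_on i N a t \<longleftrightarrow> \<not> t i \<and> threshold_on (Suc i) N a t"
proof
  assume "threshold_on i N a t"
  then show "\<not> t i \<and> threshold_on (Suc i) N a t"
    using assms by (auto simp: threshold_on_def)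
next
  assume h: "\<not> t i \<and> threshold_on (Suc i) N a t"
  show "threshold_on i N a t"
    unfolding threshold_on_def
  proof (intro allI impI)
    fix j assume "i \<le> j \<and> j < N"
    then consider "j = i" | "Suc i \<le> j \<and> j < N"
      by linarith
    then show "t j \<longleftrightarrow> a \<le> j"
      using h assms by cases (auto simp: threshold_on_def)
  qed
qed

lemma threshold_on_half_iff:
  "threshold_on 0 (n + n) n t \<longleftrightarrow> (\<forall>j<n. \<not> t j) \<and> (\<forall>i<n. t (n + i))"
proof
  assume L: "threshold_on 0 (n + n) n t"
  show "(\<forall>j<n. \<not> t j) \<and> (\<forall>i<n. t (n + i))"
  proof (intro conjI allI impI)
    fix j assume "j < n"
    then show "\<not> t j"
      using L by (simp add: threshold_on_def)
  next
    fix i assume "i < n"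
    then show "t (n + i)"
      using L by (simp add: threshold_on_def)
  qed
next
  assume A: "(\<forall>j<n. \<not> t j) \<and> (\<forall>i<n. t (n + i))"
  show "threshold_on 0 (n + n) n t"
    unfolding threshold_on_def
  proof (intro allI impI)
    fix j assume "0 \<le> j \<and> j < n + n"
    show "t j \<longleftrightarrow> n \<le> j"
    proof (cases "j < n")
      case False
      then have "j = n + (j - n)" "j - n < n"
        using \<open>0 \<le> j \<and> j < n + n\<close> by auto
      then show ?thesis
        using A False by (metis not_less)
    qed (use A in auto)
  qed
qed

lemma threshold_on_shift:
  "threshold_on (n + i) (n + N) (n + a) t \<longleftrightarrow> threshold_on i N a (\<lambda>j. t (n + j))"
proof
  assume "threshold_on (n + i) (n + N) (n + a) t"
  then show "threshold_on i N a (\<lambda>j. t (n + j))"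
    by (auto simp: threshold_on_def)
next
  assume h: "threshold_on i N a (\<lambda>j. t (n + j))"
  show "threshold_on (n + i) (n + N) (n + a) t"
    unfolding threshold_on_def
  proof (intro allI impI)
    fix j assume "n + i \<le> j \<and> j < n + N"
    then have "j = n + (j - n)" "i \<le> j - n \<and> j - n < N"
      by auto
    then show "t j \<longleftrightarrow> n + a \<le> j"
      using h unfolding threshold_on_def by (metis add_le_cancel_left)
  qed
qed

lemma threshold_on_rotate_iff:
  assumes "i < N" "a < N" and rotated: "\<And>j. i \<le> j \<Longrightarrow> j < N \<Longrightarrow> t' j = t (if j < N - 1 then Suc j else i)"
  shows "threshold_on i N a t' \<longleftrightarrow> t i \<and> threshold_on (Suc i) N (Suc a) t"
proof
  assume h: "threshold_on i N a t'"
  have "t' (N - 1) = t i"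
    using assms by (simp add: rotated)
  moreover have "t' (N - 1) \<longleftrightarrow> a \<le> N - 1"
    using h assms(1) unfolding threshold_on_def by simp
  ultimately have "t i"
    using assms(2) by simp
  moreover have "t j \<longleftrightarrow> Suc a \<le> j" if "Suc i \<le> j" "j < N" for j
  proof -
    have "j - 1 < N - 1" "Suc (j - 1) = j"
      using that by auto
    then have "t' (j - 1) = t j"
      using rotated[of "j - 1"] that by simp
    moreover have "i \<le> j - 1" "j - 1 < N"
      using that by auto
    then have "t' (j - 1) \<longleftrightarrow> a \<le> j - 1"
      using h unfolding threshold_on_def by blast
    ultimately show ?thesis
      using that by auto
  qed
  ultimately show "t i \<and> threshold_on (Suc i) N (Suc a) t"
    by (simp add: threshold_on_def)
next
  assume "t i \<and> threshold_on (Suc i) N (Suc a) t"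
  then show "threshold_on i N a t'"
    using assms by (auto simp: threshold_on_def rotated)
qed

text \<open>Layout: registers \<open>j < 2 * n\<close> of \<open>k + 1\<close> qubits each, register \<open>j\<close> being
  \<open>blk (Suc k) j\<close> with its lowest qubit as the flag of the \<open>\<bbbC>\<^sup>2\<close> factor,
  followed by \<open>n\<close> control qubits. Registers \<open>j < n\<close> are the output.\<close>

definition sampler_qubits :: "nat \<Rightarrow> nat \<Rightarrow> nat" where
  "sampler_qubits n k = 2 * n * Suc k + n"

definition ctrl_qubit :: "nat \<Rightarrow> nat \<Rightarrow> nat \<Rightarrow> nat" where
  "ctrl_qubit n k i = 2 * n * Suc k + i"

text \<open>Amplitudes of \<open>|0\<rangle>|0\<rangle> + |1\<rangle>|\<psi>\<rangle>\<close>, i.e. of \<^const>\<open>cond_sample\<close> without phase and normalisation.\<close>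

definition cond_amp :: "nat \<Rightarrow> (nat \<Rightarrow> complex) \<Rightarrow> nat \<Rightarrow> complex" where
  "cond_amp d \<psi> r = (if odd r then ext_vec d \<psi> (r div 2) else of_bool (r = 0))"

definition registers_amp :: "nat \<Rightarrow> nat \<Rightarrow> nat \<Rightarrow> (nat \<Rightarrow> complex) \<Rightarrow> nat \<Rightarrow> complex" where
  "registers_amp n k d \<psi> x = (\<Prod>j<2 * n. cond_amp d \<psi> (blk (Suc k) j x))"

definition ctrl_count :: "nat \<Rightarrow> nat \<Rightarrow> nat \<Rightarrow> nat \<Rightarrow> nat" where
  "ctrl_count n k i x = card {j. j < i \<and> bit x (ctrl_qubit n k j)}"

text \<open>After \<open>i\<close> sorting steps register \<open>j < i\<close> carries \<open>|1\<rangle>|\<psi>\<rangle>\<close> exactly if control \<open>j\<close>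
  is set, and the registers from \<open>i\<close> on are sorted, the \<open>|1\<rangle>|\<psi>\<rangle>\<close> ones last.\<close>

definition sorting_invariant :: "nat \<Rightarrow> nat \<Rightarrow> nat \<Rightarrow> nat \<Rightarrow> bool" where
  "sorting_invariant n k i x \<longleftrightarrow>
     (\<forall>j<i. odd (blk (Suc k) j x) = bit x (ctrl_qubit n k j)) \<and>
     threshold_on i (2 * n) (n + ctrl_count n k i x) (\<lambda>j. odd (blk (Suc k) j x))"

definition sorting_state :: "nat \<Rightarrow> nat \<Rightarrow> nat \<Rightarrow> (nat \<Rightarrow> complex) \<Rightarrow> nat \<Rightarrow> nat \<Rightarrow> complex" where
  "sorting_state n k d \<psi> i x =
     inv_sqrt2 ^ n * registers_amp n k d \<psi> x * of_bool (sorting_invariant n k i x)"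

definition sort_step :: "nat \<Rightarrow> nat \<Rightarrow> nat \<Rightarrow> nat \<Rightarrow> nat" where
  "sort_step n k i x =
     (if bit x (ctrl_qubit n k i) then rotate_blocks (Suc k) i (2 * n - 1 - i) x else x)"

definition sort_step_circuit :: "nat \<Rightarrow> nat \<Rightarrow> nat \<Rightarrow> gate list" where
  "sort_step_circuit n k i = crotate_blocks_circuit (Suc k) (ctrl_qubit n k i) i (2 * n - 1 - i)"

lemma classical_circuit_sort_step:
  "i < n \<Longrightarrow> classical_circuit (sampler_qubits n k) (sort_step_circuit n k i) (sort_step n k i)"
  unfolding sort_step_circuit_def sort_step_def [abs_def]
  by (rule classical_circuit_crotate_blocks) (auto simp: ctrl_qubit_def sampler_qubits_def)

lemma valid_sort_step_circuit: "i < n \<Longrightarrow> valid_circuit (sampler_qubits n k) (sort_step_circuit n k i)"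
  unfolding sort_step_circuit_def
  by (rule valid_crotate_blocks_circuit) (auto simp: ctrl_qubit_def sampler_qubits_def)

lemma bit_ctrl_sort_step:
  "i < n \<Longrightarrow> bit (sort_step n k i x) (ctrl_qubit n k j) = bit x (ctrl_qubit n k j)"
  by (simp add: sort_step_def bit_rotate_blocks ctrl_qubit_def)

lemma blk_sort_step:
  assumes "i < n"
  shows "blk (Suc k) j (sort_step n k i x) =
    (if bit x (ctrl_qubit n k i) \<and> i \<le> j \<and> j < 2 * n - 1 then blk (Suc k) (Suc j) x
     else if bit x (ctrl_qubit n k i) \<and> j = 2 * n - 1 then blk (Suc k) i x else blk (Suc k) j x)"
proof -
  have "i + (2 * n - 1 - i) = 2 * n - 1"
    using assms by simp
  then show ?thesis
    using assms by (auto simp: sort_step_def blk_rotate_blocks)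
qed

lemma registers_amp_sort_step:
  assumes "i < n"
  shows "registers_amp n k d \<psi> (sort_step n k i x) = registers_amp n k d \<psi> x"
proof -
  have "i + (2 * n - 1 - i) < 2 * n"
    using assms by simp
  then show ?thesis
    unfolding registers_amp_def sort_step_def by (simp add: prod_blk_rotate_blocks)
qed

lemma ctrl_count_Suc:
  "ctrl_count n k (Suc i) x = ctrl_count n k i x + of_bool (bit x (ctrl_qubit n k i))"
proof -
  have "{j. j < Suc i \<and> bit x (ctrl_qubit n k j)} = (if bit x (ctrl_qubit n k i)
      then insert i {j. j < i \<and> bit x (ctrl_qubit n k j)} else {j. j < i \<and> bit x (ctrl_qubit n k j)})"
    by (auto simp: less_Suc_eq)
  then show ?thesis
    by (simp add: ctrl_count_def)
qed

lemma ctrl_count_le: "ctrl_count n k i x \<le> i"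
  using card_mono[of "{..<i}" "{j. j < i \<and> bit x (ctrl_qubit n k j)}"]
  by (auto simp: ctrl_count_def)

lemma sorting_invariant_step:
  assumes "i < n"
  shows "sorting_invariant n k i (sort_step n k i x) \<longleftrightarrow> sorting_invariant n k (Suc i) x"
proof -
  let ?t = "\<lambda>j. odd (blk (Suc k) j x)"
  have count: "ctrl_count n k i (sort_step n k i x) = ctrl_count n k i x"
    using assms by (simp add: ctrl_count_def bit_ctrl_sort_step)
  have count_less: "ctrl_count n k i x < n"
    using ctrl_count_le[of n k i x] assms by simp
  show ?thesis
  proof (cases "bit x (ctrl_qubit n k i)")
    case False
    then have "sort_step n k i x = x"
      by (simp add: sort_step_def)
    moreover have "threshold_on i (2 * n) (n + ctrl_count n k i x) ?t
        \<longleftrightarrow> \<not> ?t i \<and> threshold_on (Suc i) (2 * n) (n + ctrl_count n k i x) ?t"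
      using assms by (intro threshold_on_Suc_iff) auto
    ultimately show ?thesis
      using False unfolding sorting_invariant_def ctrl_count_Suc All_less_Suc by auto
  next
    case True
    have rotated: "threshold_on i (2 * n) (n + ctrl_count n k i x) (\<lambda>j. odd (blk (Suc k) j (sort_step n k i x)))
        \<longleftrightarrow> ?t i \<and> threshold_on (Suc i) (2 * n) (n + ctrl_count n k (Suc i) x) ?t"
    proof -
      have "n + ctrl_count n k (Suc i) x = Suc (n + ctrl_count n k i x)"
        using True by (simp add: ctrl_count_Suc)
      then show ?thesis
        by (simp only:) (rule threshold_on_rotate_iff, use assms count_less True in \<open>auto simp: blk_sort_step\<close>)
    qed
    have "blk (Suc k) j (sort_step n k i x) = blk (Suc k) j x" if "j < i" for j
      using assms that by (auto simp: blk_sort_step)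
    then have "(\<forall>j<i. odd (blk (Suc k) j (sort_step n k i x)) = bit (sort_step n k i x) (ctrl_qubit n k j))
        \<longleftrightarrow> (\<forall>j<i. ?t j = bit x (ctrl_qubit n k j))"
      using assms by (simp add: bit_ctrl_sort_step)
    then show ?thesis
      unfolding sorting_invariant_def count rotated All_less_Suc using True by auto
  qed
qed

lemma sorting_state_step:
  "i < n \<Longrightarrow> sorting_state n k d \<psi> (Suc i) x = sorting_state n k d \<psi> i (sort_step n k i x)"
  by (simp add: sorting_state_def registers_amp_sort_step sorting_invariant_step)

definition sorting_circuit :: "nat \<Rightarrow> nat \<Rightarrow> gate list" where
  "sorting_circuit n k = concat (map (sort_step_circuit n k) [0..<n])"

lemma valid_sorting_circuit: "valid_circuit (sampler_qubits n k) (sorting_circuit n k)"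
  by (simp add: sorting_circuit_def valid_circuit_concat_map valid_sort_step_circuit)

lemma run_sorting_circuit:
  assumes "\<forall>x<2 ^ sampler_qubits n k. w x = sorting_state n k d \<psi> 0 x"
  shows "\<forall>x<2 ^ sampler_qubits n k.
    run_circuit (sampler_qubits n k) (sorting_circuit n k) w x = sorting_state n k d \<psi> n x"
proof -
  have "\<forall>x<2 ^ sampler_qubits n k. run_circuit (sampler_qubits n k)
      (concat (map (sort_step_circuit n k) [0..<i])) w x = sorting_state n k d \<psi> i x" if "i \<le> n" for i
    using that
  proof (induction i)
    case 0
    then show ?case using assms by simp
  next
    case (Suc i)
    then have "i < n" by simp
    show ?case
    proof (intro allI impI)
      fix x :: nat assume "x < 2 ^ sampler_qubits n k"
      then have "sort_step n k i x < 2 ^ sampler_qubits n k"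
        and step: "\<And>v. run_circuit (sampler_qubits n k) (sort_step_circuit n k i) v x = v (sort_step n k i x)"
        using classical_circuit_sort_step[OF \<open>i < n\<close>, of k] by (auto simp: classical_circuit_def)
      have "run_circuit (sampler_qubits n k) (concat (map (sort_step_circuit n k) [0..<Suc i])) w x
          = run_circuit (sampler_qubits n k) (concat (map (sort_step_circuit n k) [0..<i])) w (sort_step n k i x)"
        by (simp add: run_circuit_append step)
      also have "\<dots> = sorting_state n k d \<psi> i (sort_step n k i x)"
        using Suc.IH \<open>i < n\<close> \<open>sort_step n k i x < 2 ^ sampler_qubits n k\<close> by simp
      also have "\<dots> = sorting_state n k d \<psi> (Suc i) x"
        using \<open>i < n\<close> by (simp add: sorting_state_step)
      finally show "run_circuit (sampler_qubits n k) (concat (map (sort_step_circuit n k) [0..<Suc i])) w x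
          = sorting_state n k d \<psi> (Suc i) x" .
    qed
  qed
  then show ?thesis
    by (simp add: sorting_circuit_def)
qed


section \<open>Preparation\<close>

definition ctrl_qubits :: "nat \<Rightarrow> nat \<Rightarrow> nat list" where
  "ctrl_qubits n k = map (ctrl_qubit n k) [0..<n]"

lemma set_ctrl_qubits: "set (ctrl_qubits n k) = {2 * n * Suc k..<sampler_qubits n k}"
proof -
  have "ctrl_qubit n k = plus (2 * n * Suc k)"
    by (auto simp: ctrl_qubit_def)
  then show ?thesis
    by (simp add: ctrl_qubits_def sampler_qubits_def add.commute)
qed

definition input_vec :: "nat \<Rightarrow> nat \<Rightarrow> nat \<Rightarrow> (nat \<Rightarrow> complex) \<Rightarrow> nat \<Rightarrow> complex" where
  "input_vec n k d \<psi> x = (if x < 2 ^ (n * k) then (\<Prod>i<n. ext_vec d \<psi> (blk k i x)) else 0)"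

lemma run_hadamard_ctrl_qubits:
  assumes "x < 2 ^ sampler_qubits n k"
  shows "run_circuit (sampler_qubits n k) (hadamard_circuit (ctrl_qubits n k)) (input_vec n k d \<psi>) x =
    inv_sqrt2 ^ n * input_vec n k d \<psi> (clear_bits (ctrl_qubits n k) x)"
proof -
  have "n * k \<le> 2 * n * Suc k"
    by (simp add: algebra_simps)
  then have "input_vec n k d \<psi> y = 0" if "c \<in> set (ctrl_qubits n k)" "bit y c" for y c
    using that by (auto simp: input_vec_def set_ctrl_qubits less_power2_iff_no_bit_above)
  moreover have "distinct (ctrl_qubits n k)" "\<forall>c\<in>set (ctrl_qubits n k). 0 < c \<and> c < sampler_qubits n k"
    by (auto simp: ctrl_qubits_def ctrl_qubit_def sampler_qubits_def distinct_map inj_on_def)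
  moreover have "length (ctrl_qubits n k) = n"
    by (simp add: ctrl_qubits_def)
  ultimately show ?thesis
    using run_hadamard_circuit[OF _ _ _ assms, of "ctrl_qubits n k" "input_vec n k d \<psi>"] by simp
qed

text \<open>Input qubit \<open>i * k + b\<close> is moved to \<open>target_qubit n k i b\<close>, the qubit \<open>Suc b\<close> of
  register \<open>n + i\<close>, whose flag qubit \<open>flag_qubit k (n + i)\<close> is then set.\<close>

definition target_qubit :: "nat \<Rightarrow> nat \<Rightarrow> nat \<Rightarrow> nat \<Rightarrow> nat" where
  "target_qubit n k i b = (n + i) * Suc k + Suc b"

definition flag_qubit :: "nat \<Rightarrow> nat \<Rightarrow> nat" where
  "flag_qubit k j = j * Suc k"

lemma target_qubit_greater: "n * Suc k < target_qubit n k i b"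
proof -
  have "n * Suc k \<le> (n + i) * Suc k" by (intro mult_le_mono1) simp
  then show ?thesis by (simp add: target_qubit_def)
qed

lemma input_qubit_less_target_qubit: "i < n \<Longrightarrow> b < k \<Longrightarrow> i * k + b < target_qubit n k i' b'"
proof -
  assume "i < n" "b < k"
  then have "i * k + b < n * k"
    by (rule block_position_less)
  also have "\<dots> \<le> n * Suc k"
    by simp
  also have "\<dots> < target_qubit n k i' b'"
    by (rule target_qubit_greater)
  finally show ?thesis .
qed

lemma input_block_le_target_qubit: "i < n \<Longrightarrow> i * k + k \<le> target_qubit n k i 0"
proof -
  assume "i < n"
  then have "i * k + k \<le> n * k"
    by (rule block_end_le)
  also have "\<dots> \<le> (n + i) * Suc k"
    by (intro mult_le_mono) simp_all
  finally show ?thesis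
    by (simp add: target_qubit_def)
qed

lemma target_qubit_less: "i < n \<Longrightarrow> b < k \<Longrightarrow> target_qubit n k i b < 2 * n * Suc k"
proof -
  assume "i < n" "b < k"
  then have "target_qubit n k i b < Suc (n + i) * Suc k" by (simp add: target_qubit_def)
  also have "\<dots> \<le> 2 * n * Suc k" using \<open>i < n\<close> by (intro mult_le_mono1) simp
  finally show ?thesis .
qed

lemma target_block_le_sampler_qubits: "i < n \<Longrightarrow> target_qubit n k i 0 + k \<le> sampler_qubits n k"
proof -
  assume "i < n"
  have "target_qubit n k i 0 + k = Suc (n + i) * Suc k"
    by (simp add: target_qubit_def)
  also have "\<dots> \<le> 2 * n * Suc k"
    using \<open>i < n\<close> by (intro mult_le_mono1) simp
  finally show ?thesis
    by (simp add: sampler_qubits_def)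
qed

lemma target_qubit_add: "target_qubit n k i 0 + b = target_qubit n k i b"
  by (simp add: target_qubit_def)

lemma target_qubit_mem_iff:
  "b < k \<Longrightarrow> target_qubit n k i 0 \<le> target_qubit n k i' b \<and> target_qubit n k i' b < target_qubit n k i 0 + k
    \<longleftrightarrow> i' = i"
  using block_position_mem_iff[of "Suc b" "Suc k" "n + i" "n + i'"] by (auto simp: target_qubit_def)

lemma target_qubit_eq_iff:
  "b < k \<Longrightarrow> b' < k \<Longrightarrow> target_qubit n k i b = target_qubit n k i' b' \<longleftrightarrow> i = i' \<and> b = b'"
  using target_qubit_mem_iff[of b k n i' i] by (auto simp: target_qubit_def)

lemma target_qubit_ne_flag_qubit: "b < k \<Longrightarrow> target_qubit n k i b \<noteq> flag_qubit k (n + i')"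
  using block_position_mem_iff[of "Suc b" "Suc k" "n + i'" "n + i"] block_position_mem_iff[of 0 "Suc k" "n + i" "n + i'"]
  by (auto simp: target_qubit_def flag_qubit_def)

lemma target_qubit_range_cases:
  assumes "target_qubit n k i 0 \<le> r" "r < target_qubit n k i 0 + k"
  obtains b where "b < k" "r = target_qubit n k i b"
proof
  show "r - target_qubit n k i 0 < k"
    using assms by linarith
  show "r = target_qubit n k i (r - target_qubit n k i 0)"
    using assms(1) target_qubit_add[of n k i "r - target_qubit n k i 0"] by simp
qed

primrec copy_swaps :: "nat \<Rightarrow> nat \<Rightarrow> nat \<Rightarrow> nat \<Rightarrow> nat" where
  "copy_swaps n k 0 x = x"
| "copy_swaps n k (Suc i) x = copy_swaps n k i (swap_bits (i * k) (target_qubit n k i 0) k x)"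

lemma bit_copy_swaps_other:
  assumes "i \<le> n" "i * k \<le> r" "\<forall>i'<i. \<forall>b<k. r \<noteq> target_qubit n k i' b"
  shows "bit (copy_swaps n k i x) r = bit x r"
  using assms
proof (induction i arbitrary: x)
  case (Suc i)
  have "bit (copy_swaps n k (Suc i) x) r = bit (swap_bits (i * k) (target_qubit n k i 0) k x) r"
    using Suc by simp
  also have "\<dots> = bit x r"
  proof -
    have "\<not> (target_qubit n k i 0 \<le> r \<and> r < target_qubit n k i 0 + k)"
    proof
      assume "target_qubit n k i 0 \<le> r \<and> r < target_qubit n k i 0 + k"
      then obtain b where "b < k" "r = target_qubit n k i b"
        by (auto elim: target_qubit_range_cases)
      with Suc.prems(3) show False
        by auto
    qed
    then show ?thesis
      using Suc.prems input_block_le_target_qubit[of i n k] by (auto simp: bit_swap_bits)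
  qed
  finally show ?case .
qed simp

lemma bit_copy_swaps_input:
  assumes "i \<le> n" "i' < i" "b < k"
  shows "bit (copy_swaps n k i x) (i' * k + b) = bit x (target_qubit n k i' b)"
  using assms
proof (induction i arbitrary: x)
  case (Suc i)
  let ?y = "swap_bits (i * k) (target_qubit n k i 0) k x"
  have le: "i * k + k \<le> target_qubit n k i 0"
    using Suc.prems by (intro input_block_le_target_qubit) simp
  show ?case
  proof (cases "i' < i")
    case True
    then have "bit (copy_swaps n k (Suc i) x) (i' * k + b) = bit ?y (target_qubit n k i' b)"
      using Suc by simp
    also have "\<dots> = bit x (target_qubit n k i' b)"
      using le True Suc.prems target_qubit_greater[of n k i' b] block_end_le[of i n k]
        target_qubit_mem_iff[of b k n i i']
      by (auto simp: bit_swap_bits)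
    finally show ?thesis .
  next
    case False
    then have "i' = i"
      using Suc.prems by simp
    moreover have "i * k + b \<noteq> target_qubit n k i'' b'" for i'' b'
      using input_qubit_less_target_qubit[of i n b k i'' b'] Suc.prems by linarith
    ultimately have "bit (copy_swaps n k (Suc i) x) (i' * k + b) = bit ?y (i * k + b)"
      using Suc.prems by (simp add: bit_copy_swaps_other)
    also have "\<dots> = bit x (target_qubit n k i' b)"
      using le Suc.prems \<open>i' = i\<close> by (simp add: bit_swap_bits target_qubit_add[of n k i b, symmetric] add.commute)
    finally show ?thesis .
  qed
qed simp

lemma bit_copy_swaps_target:
  assumes "i \<le> n" "i' < i" "b < k"
  shows "bit (copy_swaps n k i x) (target_qubit n k i' b) = bit x (i' * k + b)"
  using assms
proof (induction i arbitrary: x)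
  case (Suc i)
  let ?y = "swap_bits (i * k) (target_qubit n k i 0) k x"
  have le: "i * k + k \<le> target_qubit n k i 0"
    using Suc.prems by (intro input_block_le_target_qubit) simp
  show ?case
  proof (cases "i' < i")
    case True
    then have "bit (copy_swaps n k (Suc i) x) (target_qubit n k i' b) = bit ?y (i' * k + b)"
      using Suc by simp
    also have "\<dots> = bit x (i' * k + b)"
      using le True Suc.prems input_qubit_less_target_qubit[of i' n b k i 0]
        block_position_mem_iff[of b k i i']
      by (auto simp: bit_swap_bits)
    finally show ?thesis .
  next
    case False
    then have "i' = i"
      using Suc.prems by simp
    have "i * k \<le> target_qubit n k i b"
      using le target_qubit_add[of n k i b] by simp
    have "bit (copy_swaps n k (Suc i) x) (target_qubit n k i' b) = bit (copy_swaps n k i ?y) (target_qubit n k i b)"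
      using \<open>i' = i\<close> by simp
    also have "\<dots> = bit ?y (target_qubit n k i b)"
      by (rule bit_copy_swaps_other) (use Suc.prems \<open>i * k \<le> target_qubit n k i b\<close> in \<open>auto simp: target_qubit_eq_iff\<close>)
    also have "\<dots> = bit x (i' * k + b)"
      using le Suc.prems \<open>i' = i\<close> by (simp add: bit_swap_bits target_qubit_add[of n k i b, symmetric] add.commute)
    finally show ?thesis .
  qed
qed simp

definition copy_swaps_circuit :: "nat \<Rightarrow> nat \<Rightarrow> nat \<Rightarrow> gate list" where
  "copy_swaps_circuit n k i = concat (map (\<lambda>i'. swap_bits_circuit (i' * k) (target_qubit n k i' 0) k) [0..<i])"

lemma classical_circuit_copy_swaps:
  "i \<le> n \<Longrightarrow> classical_circuit (sampler_qubits n k) (copy_swaps_circuit n k i) (copy_swaps n k i)"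
proof (induction i)
  case 0
  then show ?case by (simp add: copy_swaps_circuit_def classical_circuit_def)
next
  case (Suc i)
  have "classical_circuit (sampler_qubits n k) (swap_bits_circuit (i * k) (target_qubit n k i 0) k)
      (swap_bits (i * k) (target_qubit n k i 0) k)"
    using Suc.prems input_block_le_target_qubit target_block_le_sampler_qubits
    by (intro classical_circuit_swap_bits) auto
  with Suc show ?case
    by (auto simp: copy_swaps_circuit_def dest: classical_circuit_append)
qed

lemma valid_copy_swaps_circuit: "valid_circuit (sampler_qubits n k) (copy_swaps_circuit n k n)"
  by (auto simp: copy_swaps_circuit_def valid_circuit_concat_map
      intro!: valid_swap_bits_circuit input_block_le_target_qubit target_block_le_sampler_qubits)

lemma flag_qubit_bounds: "i < n \<Longrightarrow> n * Suc k \<le> flag_qubit k (n + i) \<and> flag_qubit k (n + i) < 2 * n * Suc k"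
proof -
  assume "i < n"
  have "n * Suc k \<le> (n + i) * Suc k"
    by (intro mult_le_mono1) simp
  moreover have "(n + i) * Suc k < Suc (n + i) * Suc k"
    by simp
  moreover have "Suc (n + i) * Suc k \<le> 2 * n * Suc k"
    using \<open>i < n\<close> by (intro mult_le_mono1) simp
  ultimately show ?thesis
    by (simp add: flag_qubit_def)
qed

lemma flag_qubit_eq_iff: "flag_qubit k j = flag_qubit k j' \<longleftrightarrow> j = j'"
  unfolding flag_qubit_def by (simp only: mult_cancel2) simp

primrec flip_flags :: "nat \<Rightarrow> nat \<Rightarrow> nat \<Rightarrow> nat \<Rightarrow> nat" where
  "flip_flags n k 0 x = x"
| "flip_flags n k (Suc i) x =
     flip_flags n k i (classical_map (\<lambda>p q. \<not> p) (\<lambda>p q. q) (flag_qubit k (n + i)) (ctrl_qubit n k 0) x)"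

lemma bit_flip_flags:
  "i \<le> n \<Longrightarrow> bit (flip_flags n k i x) r \<longleftrightarrow> bit x r \<noteq> (\<exists>i'<i. r = flag_qubit k (n + i'))"
proof (induction i arbitrary: x)
  case (Suc i)
  have "flag_qubit k (n + i) \<noteq> ctrl_qubit n k 0"
    using flag_qubit_bounds[of i n k] Suc.prems by (simp add: ctrl_qubit_def)
  then have flip: "bit (classical_map (\<lambda>p q. \<not> p) (\<lambda>p q. q) (flag_qubit k (n + i)) (ctrl_qubit n k 0) x) r
      \<longleftrightarrow> bit x r \<noteq> (r = flag_qubit k (n + i))"
    by (auto simp: classical_map_def bit_put_bit)
  have "(\<exists>i'<Suc i. r = flag_qubit k (n + i')) \<longleftrightarrow> (\<exists>i'<i. r = flag_qubit k (n + i')) \<or> r = flag_qubit k (n + i)"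
    by (auto simp: less_Suc_eq)
  moreover have "\<not> (\<exists>i'<i. flag_qubit k (n + i) = flag_qubit k (n + i'))"
    by (simp add: flag_qubit_eq_iff)
  ultimately show ?case
    using Suc flip by (cases "r = flag_qubit k (n + i)") auto
qed simp

definition flip_flags_circuit :: "nat \<Rightarrow> nat \<Rightarrow> nat \<Rightarrow> gate list" where
  "flip_flags_circuit n k i = map (\<lambda>i'. (X_gate, flag_qubit k (n + i'), ctrl_qubit n k 0)) [0..<i]"

lemma classical_circuit_flip_flags:
  "i \<le> n \<Longrightarrow> classical_circuit (sampler_qubits n k) (flip_flags_circuit n k i) (flip_flags n k i)"
proof (induction i)
  case 0
  then show ?case by (simp add: flip_flags_circuit_def classical_circuit_def)
next
  case (Suc i)
  have "classical_circuit (sampler_qubits n k) [(X_gate, flag_qubit k (n + i), ctrl_qubit n k 0)]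
      (classical_map (\<lambda>p q. \<not> p) (\<lambda>p q. q) (flag_qubit k (n + i)) (ctrl_qubit n k 0))"
    using Suc.prems flag_qubit_bounds[of i n k] unfolding X_gate_def
    by (intro classical_circuit_classical_gate) (auto simp: ctrl_qubit_def sampler_qubits_def)
  with Suc show ?case
    by (auto simp: flip_flags_circuit_def dest: classical_circuit_append)
qed

lemma valid_flip_flags_circuit: "valid_circuit (sampler_qubits n k) (flip_flags_circuit n k n)"
proof -
  have "valid_gate (sampler_qubits n k) (X_gate, flag_qubit k (n + i), ctrl_qubit n k 0)" if "i < n" for i
    using that flag_qubit_bounds[of i n k]
    by (auto simp: valid_gate_def unitary_X_gate ctrl_qubit_def sampler_qubits_def)
  then show ?thesis
    by (auto simp: flip_flags_circuit_def valid_circuit_def)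
qed

definition relayout :: "nat \<Rightarrow> nat \<Rightarrow> nat \<Rightarrow> nat" where
  "relayout n k x = copy_swaps n k n (flip_flags n k n x)"

definition relayout_circuit :: "nat \<Rightarrow> nat \<Rightarrow> gate list" where
  "relayout_circuit n k = copy_swaps_circuit n k n @ flip_flags_circuit n k n"

lemma classical_circuit_relayout:
  "classical_circuit (sampler_qubits n k) (relayout_circuit n k) (relayout n k)"
  using classical_circuit_append[OF classical_circuit_copy_swaps classical_circuit_flip_flags]
  by (simp add: relayout_circuit_def relayout_def [abs_def])

lemma valid_relayout_circuit: "valid_circuit (sampler_qubits n k) (relayout_circuit n k)"
  by (simp add: relayout_circuit_def valid_copy_swaps_circuit valid_flip_flags_circuit)

lemma bit_relayout_input:
  "i < n \<Longrightarrow> b < k \<Longrightarrow> bit (relayout n k x) (i * k + b) = bit x (target_qubit n k i b)"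
  by (simp add: relayout_def bit_copy_swaps_input bit_flip_flags target_qubit_ne_flag_qubit)

lemma bit_relayout_target:
  assumes "i < n" "b < k"
  shows "bit (relayout n k x) (target_qubit n k i b) = bit x (i * k + b)"
proof -
  have "i * k + b \<noteq> flag_qubit k (n + i')" if "i' < n" for i'
    using block_position_less[OF assms] flag_qubit_bounds[OF that, of k] by (simp add: less_le_trans)
  then show ?thesis
    using assms by (auto simp: relayout_def bit_copy_swaps_target bit_flip_flags)
qed

lemma bit_relayout_other:
  "n * k \<le> r \<Longrightarrow> \<forall>i<n. \<forall>b<k. r \<noteq> target_qubit n k i b \<Longrightarrow>
    bit (relayout n k x) r \<longleftrightarrow> bit x r \<noteq> (\<exists>i<n. r = flag_qubit k (n + i))"
  by (simp add: relayout_def bit_copy_swaps_other bit_flip_flags)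

lemma sampler_qubit_cases:
  obtains (low) "p < n * Suc k"
  | (target) i b where "i < n" "b < k" "p = target_qubit n k i b"
  | (flag) i where "i < n" "p = flag_qubit k (n + i)"
  | (high) "2 * n * Suc k \<le> p"
proof -
  consider "p < n * Suc k" | "2 * n * Suc k \<le> p" | "n * Suc k \<le> p" "p < 2 * n * Suc k"
    by linarith
  then show ?thesis
  proof cases
    case 3
    define i where "i = p div Suc k - n"
    have "n * Suc k div Suc k \<le> p div Suc k"
      using 3(1) by (rule div_le_mono)
    then have "n \<le> p div Suc k"
      by (metis nonzero_mult_div_cancel_right Zero_not_Suc)
    moreover have "p div Suc k < 2 * n"
      using 3(2) by (simp add: less_mult_imp_div_less)
    ultimately have "i < n" "n + i = p div Suc k"
      by (simp_all add: i_def)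
    then have p: "p = (n + i) * Suc k + p mod Suc k"
      by (metis div_mult_mod_eq)
    show ?thesis
    proof (cases "p mod Suc k")
      case 0
      then show ?thesis using flag \<open>i < n\<close> p by (simp add: flag_qubit_def)
    next
      case (Suc b)
      then have "b < k"
        using mod_less_divisor[of "Suc k" p] by simp
      then show ?thesis using target \<open>i < n\<close> p Suc by (simp add: target_qubit_def)
    qed
  qed (use low high in auto)
qed

lemma bit_relayout_low:
  assumes "n * k \<le> p" "p < n * Suc k"
  shows "bit (relayout n k x) p = bit x p"
proof -
  have "p \<noteq> target_qubit n k i b" for i b
    using assms(2) target_qubit_greater[of n k i b] by simp
  moreover have "p \<noteq> flag_qubit k (n + i)" if "i < n" for i
    using assms(2) flag_qubit_bounds[OF that, of k] by simp
  ultimately show ?thesis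
    using assms(1) by (simp add: bit_relayout_other)
qed

lemma bit_relayout_flag:
  assumes "i < n"
  shows "bit (relayout n k x) (flag_qubit k (n + i)) \<longleftrightarrow> \<not> bit x (flag_qubit k (n + i))"
proof -
  have "flag_qubit k (n + i) \<noteq> target_qubit n k i' b" if "b < k" for i' b
    using target_qubit_ne_flag_qubit[OF that] by metis
  moreover have "n * k \<le> flag_qubit k (n + i)"
    using flag_qubit_bounds[OF assms, of k] by simp
  ultimately show ?thesis
    using assms by (auto simp: bit_relayout_other)
qed

lemma bit_relayout_high:
  assumes "2 * n * Suc k \<le> p"
  shows "bit (relayout n k x) p = bit x p"
proof -
  have "p \<noteq> target_qubit n k i b" if "i < n" "b < k" for i b
    using assms target_qubit_less[OF that] by simp
  moreover have "p \<noteq> flag_qubit k (n + i)" if "i < n" for i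
    using assms flag_qubit_bounds[OF that, of k] by simp
  moreover have "n * k \<le> p"
    using assms by (simp add: le_trans[OF _ assms])
  ultimately show ?thesis
    by (simp add: bit_relayout_other)
qed

lemma clear_ctrl_qubits_less_iff:
  "clear_bits (ctrl_qubits n k) y < 2 ^ (n * k) \<longleftrightarrow>
    (\<forall>p. n * k \<le> p \<longrightarrow> p < 2 * n * Suc k \<or> sampler_qubits n k \<le> p \<longrightarrow> \<not> bit y p)"
  by (auto simp: less_power2_iff_no_bit_above bit_clear_bits set_ctrl_qubits)

lemma relayout_high_bits_imp:
  assumes H: "\<forall>p. n * k \<le> p \<longrightarrow> p < 2 * n * Suc k \<or> sampler_qubits n k \<le> p \<longrightarrow> \<not> bit (relayout n k x) p"
  shows "(\<forall>q<n * Suc k. \<not> bit x q) \<and> (\<forall>i<n. bit x (flag_qubit k (n + i)))"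
proof (intro conjI allI impI)
  fix q assume "q < n * Suc k"
  show "\<not> bit x q"
  proof (cases "q < n * k")
    case True
    then obtain i b where "i < n" "b < k" "q = i * k + b"
      by (rule block_position_cases)
    moreover have "n * k \<le> target_qubit n k i b" "target_qubit n k i b < 2 * n * Suc k"
      using target_qubit_greater[of n k i b] target_qubit_less[OF \<open>i < n\<close> \<open>b < k\<close>] by simp_all
    ultimately show ?thesis
      using H by (metis bit_relayout_target)
  next
    case False
    then show ?thesis
      using H \<open>q < n * Suc k\<close> bit_relayout_low[of n k q x] by (simp add: less_le_trans)
  qed
next
  fix i assume "i < n"
  then show "bit x (flag_qubit k (n + i))"
    using H flag_qubit_bounds[of i n k] bit_relayout_flag[of i n k x] by simp
qed

lemma not_bit_relayout_high:
  assumes "x < 2 ^ sampler_qubits n k" "\<forall>q<n * Suc k. \<not> bit x q" "\<forall>i<n. bit x (flag_qubit k (n + i))"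
    and "n * k \<le> p" "p < 2 * n * Suc k \<or> sampler_qubits n k \<le> p"
  shows "\<not> bit (relayout n k x) p"
proof (cases rule: sampler_qubit_cases[of p n k])
  case low
  then show ?thesis using assms bit_relayout_low by simp
next
  case (target i b)
  then show ?thesis using assms block_position_less[of i n b k] by (simp add: bit_relayout_target)
next
  case (flag i)
  then show ?thesis using assms bit_relayout_flag by simp
next
  case high
  then show ?thesis
    using assms bit_relayout_high[of n k p x] by (auto simp: less_power2_iff_no_bit_above)
qed

lemma clear_relayout_less_iff:
  assumes "x < 2 ^ sampler_qubits n k"
  shows "clear_bits (ctrl_qubits n k) (relayout n k x) < 2 ^ (n * k) \<longleftrightarrow>
    (\<forall>q<n * Suc k. \<not> bit x q) \<and> (\<forall>i<n. bit x (flag_qubit k (n + i)))"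
  unfolding clear_ctrl_qubits_less_iff using relayout_high_bits_imp not_bit_relayout_high[OF assms] by blast

lemma blk_clear_relayout:
  assumes "i < n"
  shows "blk k i (clear_bits (ctrl_qubits n k) (relayout n k x)) = blk (Suc k) (n + i) x div 2"
proof (rule bit_eqI)
  fix b
  show "bit (blk k i (clear_bits (ctrl_qubits n k) (relayout n k x))) b = bit (blk (Suc k) (n + i) x div 2) b"
  proof (cases "b < k")
    case True
    have "i * k + b < 2 * n * Suc k"
      using block_position_less[OF assms True] by (simp add: less_le_trans)
    then show ?thesis
      using True assms
      by (simp add: bit_blk bit_clear_bits set_ctrl_qubits bit_relayout_input target_qubit_def flip: bit_Suc)
  next
    case False
    then show ?thesis by (simp add: bit_blk flip: bit_Suc)
  qed
qed

lemma sorting_invariant_0_iff: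
  "sorting_invariant n k 0 x \<longleftrightarrow> (\<forall>j<n. even (blk (Suc k) j x)) \<and> (\<forall>i<n. odd (blk (Suc k) (n + i) x))"
  by (simp add: sorting_invariant_def ctrl_count_def mult_2 threshold_on_half_iff)

lemma registers_amp_initial:
  "registers_amp n k d \<psi> x * of_bool (sorting_invariant n k 0 x) =
     of_bool ((\<forall>j<n. blk (Suc k) j x = 0) \<and> (\<forall>i<n. odd (blk (Suc k) (n + i) x))) *
     (\<Prod>i<n. ext_vec d \<psi> (blk (Suc k) (n + i) x div 2))"
proof -
  let ?R = "\<lambda>j. blk (Suc k) j x"
  note inv = sorting_invariant_0_iff[of n k x]
  have split: "registers_amp n k d \<psi> x = (\<Prod>j<n. cond_amp d \<psi> (?R j)) * (\<Prod>i<n. cond_amp d \<psi> (?R (n + i)))"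
    unfolding registers_amp_def mult_2 by (rule prod_lessThan_add)
  show ?thesis
  proof (cases "(\<forall>j<n. ?R j = 0) \<and> (\<forall>i<n. odd (?R (n + i)))")
    case True
    then show ?thesis
      using inv split by (simp add: cond_amp_def)
  next
    case False
    show ?thesis
    proof (cases "sorting_invariant n k 0 x")
      case True
      then obtain j where "j < n" "?R j \<noteq> 0" "even (?R j)"
        using False inv by auto
      then have "(\<Prod>j<n. cond_amp d \<psi> (?R j)) = 0"
        by (intro prod_zero bexI[of _ j]) (auto simp: cond_amp_def)
      then have "registers_amp n k d \<psi> x = 0"
        by (simp add: split)
      then show ?thesis
        using False by simp
    qed (use False in simp)
  qed
qed

lemma sorting_state_initial:
  assumes "x < 2 ^ sampler_qubits n k"
  shows "sorting_state n k d \<psi> 0 x =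
    inv_sqrt2 ^ n * input_vec n k d \<psi> (clear_bits (ctrl_qubits n k) (relayout n k x))"
proof -
  have "(\<forall>i<n. bit x (flag_qubit k (n + i))) \<longleftrightarrow> (\<forall>i<n. odd (blk (Suc k) (n + i) x))"
    by (simp add: odd_blk_Suc flag_qubit_def)
  then show ?thesis
    unfolding sorting_state_def mult.assoc registers_amp_initial input_vec_def
      clear_relayout_less_iff[OF assms] no_bit_below_iff_blk_eq_0
    by (simp add: blk_clear_relayout)
qed


section \<open>Uncomputing the controls\<close>

lemma flag_qubit_less_ctrl_qubit: "j < n \<Longrightarrow> flag_qubit k j < ctrl_qubit n k i"
proof -
  assume "j < n"
  then have "j * Suc k < n * Suc k"
    by (intro mult_less_mono1) simp_all
  then show ?thesis
    by (simp add: flag_qubit_def ctrl_qubit_def)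
qed

primrec uncompute :: "nat \<Rightarrow> nat \<Rightarrow> nat \<Rightarrow> nat \<Rightarrow> nat" where
  "uncompute n k 0 x = x"
| "uncompute n k (Suc i) x =
     uncompute n k i (classical_map (\<lambda>p q. p \<noteq> q) (\<lambda>p q. q) (ctrl_qubit n k i) (flag_qubit k i) x)"

definition uncompute_circuit :: "nat \<Rightarrow> nat \<Rightarrow> gate list" where
  "uncompute_circuit n k = map (\<lambda>j. (CNOT_gate, ctrl_qubit n k j, flag_qubit k j)) [0..<n]"

lemma classical_circuit_uncompute:
  "classical_circuit (sampler_qubits n k) (uncompute_circuit n k) (uncompute n k n)"
proof -
  have "classical_circuit (sampler_qubits n k)
      (map (\<lambda>j. (CNOT_gate, ctrl_qubit n k j, flag_qubit k j)) [0..<i]) (uncompute n k i)"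
    if "i \<le> n" for i
    using that
  proof (induction i)
    case 0
    then show ?case by (simp add: classical_circuit_def)
  next
    case (Suc i)
    have "classical_circuit (sampler_qubits n k) [(CNOT_gate, ctrl_qubit n k i, flag_qubit k i)]
        (classical_map (\<lambda>p q. p \<noteq> q) (\<lambda>p q. q) (ctrl_qubit n k i) (flag_qubit k i))"
      using Suc.prems flag_qubit_less_ctrl_qubit[of i n k i] unfolding CNOT_gate_def
      by (intro classical_circuit_classical_gate) (auto simp: ctrl_qubit_def sampler_qubits_def)
    with Suc show ?case
      by (auto dest: classical_circuit_append)
  qed
  then show ?thesis
    by (simp add: uncompute_circuit_def)
qed

lemma valid_uncompute_circuit: "valid_circuit (sampler_qubits n k) (uncompute_circuit n k)"
proof -
  have "valid_gate (sampler_qubits n k) (CNOT_gate, ctrl_qubit n k j, flag_qubit k j)" if "j < n" for j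
    using flag_qubit_less_ctrl_qubit[OF that, of k j] that
    by (auto simp: valid_gate_def unitary_CNOT_gate ctrl_qubit_def sampler_qubits_def)
  then show ?thesis
    by (auto simp: uncompute_circuit_def valid_circuit_def)
qed

lemma bit_uncompute_other:
  "i \<le> n \<Longrightarrow> p \<notin> ctrl_qubit n k ` {..<i} \<Longrightarrow> bit (uncompute n k i x) p = bit x p"
proof (induction i arbitrary: x)
  case (Suc i)
  have "flag_qubit k i \<noteq> ctrl_qubit n k i"
    using flag_qubit_less_ctrl_qubit[of i n k i] Suc.prems by simp
  moreover have "p \<notin> ctrl_qubit n k ` {..<i}" "p \<noteq> ctrl_qubit n k i"
    using Suc.prems(2) by auto
  ultimately show ?case
    using Suc.IH Suc.prems(1) by (simp add: classical_map_def bit_put_bit)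
qed simp

lemma bit_uncompute_ctrl:
  "j < i \<Longrightarrow> i \<le> n \<Longrightarrow>
    bit (uncompute n k i x) (ctrl_qubit n k j) \<longleftrightarrow> bit x (ctrl_qubit n k j) \<noteq> bit x (flag_qubit k j)"
proof (induction i arbitrary: x)
  case (Suc i)
  have flag: "flag_qubit k j' \<noteq> ctrl_qubit n k i" if "j' < n" for j'
    using flag_qubit_less_ctrl_qubit[OF that, of k i] by simp
  show ?case
  proof (cases "j < i")
    case True
    with Suc flag[of j] show ?thesis
      by (simp add: classical_map_def bit_put_bit ctrl_qubit_def)
  next
    case False
    then have "j = i"
      using Suc.prems by simp
    have "ctrl_qubit n k i \<notin> ctrl_qubit n k ` {..<i}"
      by (auto simp: ctrl_qubit_def)
    then have "bit (uncompute n k (Suc i) x) (ctrl_qubit n k i) =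
        bit (classical_map (\<lambda>p q. p \<noteq> q) (\<lambda>p q. q) (ctrl_qubit n k i) (flag_qubit k i) x) (ctrl_qubit n k i)"
      using Suc.prems by (simp add: bit_uncompute_other)
    then show ?thesis
      using Suc.prems flag[of i] \<open>j = i\<close> by (simp add: classical_map_def bit_put_bit)
  qed
qed simp

lemma blk_uncompute: "j < 2 * n \<Longrightarrow> blk (Suc k) j (uncompute n k n x) = blk (Suc k) j x"
proof (rule bit_eqI)
  fix b assume "j < 2 * n"
  have "j * Suc k + b \<notin> ctrl_qubit n k ` {..<n}" if "b < Suc k"
    using block_position_less[OF \<open>j < 2 * n\<close> that] by (auto simp: ctrl_qubit_def)
  then show "bit (blk (Suc k) j (uncompute n k n x)) b = bit (blk (Suc k) j x) b"
    by (auto simp: bit_blk bit_uncompute_other)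
qed

definition odd_count :: "nat \<Rightarrow> nat \<Rightarrow> nat \<Rightarrow> nat" where
  "odd_count n k x = card {j. j < n \<and> odd (blk (Suc k) j x)}"

definition final_state :: "nat \<Rightarrow> nat \<Rightarrow> nat \<Rightarrow> (nat \<Rightarrow> complex) \<Rightarrow> nat \<Rightarrow> complex" where
  "final_state n k d \<psi> x = inv_sqrt2 ^ n * registers_amp n k d \<psi> x *
     of_bool ((\<forall>j<n. \<not> bit x (ctrl_qubit n k j)) \<and>
       threshold_on n (2 * n) (n + odd_count n k x) (\<lambda>j. odd (blk (Suc k) j x)))"

lemma sorting_state_uncompute: "sorting_state n k d \<psi> n (uncompute n k n x) = final_state n k d \<psi> x"
proof -
  let ?y = "uncompute n k n x"
  have regs: "blk (Suc k) j ?y = blk (Suc k) j x" if "j < 2 * n" for j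
    using that by (rule blk_uncompute)
  have ctrl: "bit ?y (ctrl_qubit n k j) \<longleftrightarrow> bit x (ctrl_qubit n k j) \<noteq> odd (blk (Suc k) j x)" if "j < n" for j
    using that by (simp add: bit_uncompute_ctrl odd_blk_Suc flag_qubit_def)
  have "registers_amp n k d \<psi> ?y = registers_amp n k d \<psi> x"
    by (simp add: registers_amp_def regs)
  moreover have "(\<forall>j<n. odd (blk (Suc k) j ?y) = bit ?y (ctrl_qubit n k j)) \<longleftrightarrow> (\<forall>j<n. \<not> bit x (ctrl_qubit n k j))"
    using regs ctrl by auto
  moreover have "threshold_on n (2 * n) a (\<lambda>j. odd (blk (Suc k) j ?y)) \<longleftrightarrow>
      threshold_on n (2 * n) a (\<lambda>j. odd (blk (Suc k) j x))" for a
    by (simp add: threshold_on_def regs)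
  moreover have "ctrl_count n k n ?y = odd_count n k x" if "\<forall>j<n. \<not> bit x (ctrl_qubit n k j)"
    unfolding ctrl_count_def odd_count_def using that ctrl by (intro arg_cong[where f = card]) auto
  ultimately show ?thesis
    by (auto simp: sorting_state_def final_state_def sorting_invariant_def)
qed


section \<open>Tracing out the ancillas\<close>

lemma bit_add_mult_power2:
  fixes a t :: nat
  assumes "a < 2 ^ M"
  shows "bit (a + 2 ^ M * t) p \<longleftrightarrow> (if p < M then bit a p else bit t (p - M))"
proof -
  have "\<not> bit a q \<or> \<not> bit (push_bit M t) q" for q
    using assms by (auto simp: bit_push_bit_iff_nat less_power2_iff_no_bit_above)
  then have "a + push_bit M t = or a (push_bit M t)"
    by (rule disjunctive_add)
  then have "a + 2 ^ M * t = or a (push_bit M t)"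
    by (simp add: push_bit_eq_mult mult.commute)
  then show ?thesis
    using assms by (auto simp: bit_or_iff bit_push_bit_iff_nat less_power2_iff_no_bit_above)
qed

lemma blk_add_mult_power2:
  assumes "a < 2 ^ (n * s)"
  shows "blk s j (a + 2 ^ (n * s) * t) = (if j < n then blk s j a else blk s (j - n) t)"
proof (rule bit_eqI)
  fix b
  show "bit (blk s j (a + 2 ^ (n * s) * t)) b = bit (if j < n then blk s j a else blk s (j - n) t) b"
  proof (cases "b < s")
    case True
    have "j * s + b < n * s \<longleftrightarrow> j < n"
      using block_position_less[of j n b s] True by (metis add_lessD1 mult_less_cancel2)
    moreover have "\<not> j < n \<Longrightarrow> j * s + b - n * s = (j - n) * s + b"
      by (simp add: diff_mult_distrib)
    ultimately show ?thesis
      using True by (simp add: bit_blk bit_add_mult_power2[OF assms])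
  qed (simp add: bit_blk)
qed

definition out_amp :: "nat \<Rightarrow> nat \<Rightarrow> nat \<Rightarrow> (nat \<Rightarrow> complex) \<Rightarrow> nat \<Rightarrow> complex" where
  "out_amp n k d \<psi> a = (\<Prod>j<n. cond_amp d \<psi> (blk (Suc k) j a))"

text \<open>The state of the discarded registers and controls when the output holds \<open>A\<close> copies
  of \<open>|1\<rangle>|\<psi>\<rangle>\<close>.\<close>

definition garbage_amp :: "nat \<Rightarrow> nat \<Rightarrow> nat \<Rightarrow> (nat \<Rightarrow> complex) \<Rightarrow> nat \<Rightarrow> nat \<Rightarrow> complex" where
  "garbage_amp n k d \<psi> A t = (\<Prod>i<n. cond_amp d \<psi> (blk (Suc k) i t)) *
     of_bool ((\<forall>j<n. \<not> bit t (n * Suc k + j)) \<and> threshold_on 0 n A (\<lambda>i. odd (blk (Suc k) i t)))"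

lemma final_state_split:
  assumes "a < 2 ^ (n * Suc k)"
  shows "final_state n k d \<psi> (a + 2 ^ (n * Suc k) * t) =
    inv_sqrt2 ^ n * out_amp n k d \<psi> a * garbage_amp n k d \<psi> (odd_count n k a) t"
proof -
  let ?x = "a + 2 ^ (n * Suc k) * t"
  have blk: "blk (Suc k) j ?x = (if j < n then blk (Suc k) j a else blk (Suc k) (j - n) t)" for j
    using assms by (rule blk_add_mult_power2)
  have "ctrl_qubit n k j = n * Suc k + (n * Suc k + j)" for j
    by (simp add: ctrl_qubit_def)
  then have "bit ?x (ctrl_qubit n k j) = bit t (n * Suc k + j)" for j
    using assms by (simp only: bit_add_mult_power2) simp
  moreover have "registers_amp n k d \<psi> ?x = out_amp n k d \<psi> a * (\<Prod>i<n. cond_amp d \<psi> (blk (Suc k) i t))"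
    unfolding registers_amp_def mult_2 prod_lessThan_add out_amp_def
    by (intro arg_cong2[where f = "(*)"] prod.cong) (simp_all add: blk del: mult_Suc_right)
  moreover have "odd_count n k ?x = odd_count n k a"
    unfolding odd_count_def by (rule arg_cong[where f = card]) (auto simp: blk simp del: mult_Suc_right)
  moreover have "threshold_on n (2 * n) (n + A) (\<lambda>j. odd (blk (Suc k) j ?x)) \<longleftrightarrow>
      threshold_on 0 n A (\<lambda>i. odd (blk (Suc k) i t))" for A
    using threshold_on_shift[of n 0 n A] by (simp add: mult_2 blk del: mult_Suc_right)
  ultimately show ?thesis
    by (simp add: final_state_def garbage_amp_def mult_ac)
qed

lemma garbage_amp_split:
  assumes "t < 2 ^ (n * Suc k)" "t' < 2 ^ n"
  shows "garbage_amp n k d \<psi> A (t + 2 ^ (n * Suc k) * t') = of_bool (t' = 0) * garbage_amp n k d \<psi> A t"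
proof -
  have "blk (Suc k) i (t + 2 ^ (n * Suc k) * t') = blk (Suc k) i t" if "i < n" for i
    using blk_add_mult_power2[OF assms(1)] that by simp
  moreover have "(\<forall>j<n. \<not> bit t' j) \<longleftrightarrow> t' = 0"
  proof
    assume "\<forall>j<n. \<not> bit t' j"
    with assms(2) have "\<not> bit t' j" for j
      by (metis less_power2_iff_no_bit_above not_le)
    then show "t' = 0"
      by (intro bit_eqI) simp
  qed simp
  ultimately show ?thesis
    using assms(1) by (auto simp: garbage_amp_def bit_add_mult_power2 less_power2_iff_no_bit_above intro!: prod.cong)
qed

lemma prod_of_bool: "(\<Prod>i<(n::nat). of_bool (P i) :: 'a::comm_semiring_1) = of_bool (\<forall>i<n. P i)"
  by (induction n) (auto simp: less_Suc_eq)

lemma garbage_amp_mult_cnj: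
  assumes "t < 2 ^ (n * Suc k)"
  shows "garbage_amp n k d \<psi> A t * cnj (garbage_amp n k d \<psi> B t) =
    (\<Prod>i<n. cond_amp d \<psi> (blk (Suc k) i t) * cnj (cond_amp d \<psi> (blk (Suc k) i t)) *
       of_bool (odd (blk (Suc k) i t) = (A \<le> i)) * of_bool (odd (blk (Suc k) i t) = (B \<le> i)))"
proof -
  have "\<not> bit t (n * Suc k + j)" for j
    using assms by (simp add: less_power2_iff_no_bit_above)
  then have G: "garbage_amp n k d \<psi> C t =
      (\<Prod>i<n. cond_amp d \<psi> (blk (Suc k) i t) * of_bool (odd (blk (Suc k) i t) = (C \<le> i)))" for C
    by (simp add: garbage_amp_def threshold_on_def prod.distrib prod_of_bool)
  show ?thesis
    unfolding G cnj_prod prod.distrib[symmetric] by (intro prod.cong refl) (simp add: mult_ac)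
qed

lemma sum_lessThan_mult: "(\<Sum>t<A * B. f t) = (\<Sum>t'<B. \<Sum>u<A. f (u + A * t'))" for A B :: nat
proof -
  have "(\<Sum>t<B * A. f t) = (\<Sum>m<B. sum f {m * A..<m * A + A})"
    by (rule sum.nat_group[symmetric])
  also have "\<dots> = (\<Sum>m<B. \<Sum>u<A. f (u + A * m))"
  proof (rule sum.cong[OF refl])
    fix m
    have "sum f {0 + m * A..<A + m * A} = (\<Sum>i = 0..<A. f (i + m * A))"
      by (rule sum.shift_bounds_nat_ivl)
    then show "sum f {m * A..<m * A + A} = (\<Sum>u<A. f (u + A * m))"
      by (simp add: add.commute mult.commute atLeast0LessThan)
  qed
  finally show ?thesis
    by (simp add: mult.commute)
qed

lemma sum_prod_blk:
  fixes h :: "nat \<Rightarrow> nat \<Rightarrow> 'a::comm_semiring_1"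
  shows "(\<Sum>t<2 ^ (s * n). \<Prod>i<n. h i (blk s i t)) = (\<Prod>i<n. \<Sum>u<2 ^ s. h i u)"
proof (induction n arbitrary: h)
  case (Suc n)
  have blk: "blk s 0 (u + 2 ^ s * t) = u" "blk s (Suc i) (u + 2 ^ s * t) = blk s i t" if "u < 2 ^ s" for u t i
  proof -
    have "blk s j (u + 2 ^ s * t) = (if j < 1 then blk s j u else blk s (j - 1) t)" for j
      using blk_add_mult_power2[of u 1 s j t] that by simp
    moreover have "blk s 0 u = u"
      using that by (simp add: blk_def)
    ultimately show "blk s 0 (u + 2 ^ s * t) = u" "blk s (Suc i) (u + 2 ^ s * t) = blk s i t"
      by simp_all
  qed
  have "(\<Sum>t<2 ^ (s * Suc n). \<Prod>i<Suc n. h i (blk s i t)) =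
      (\<Sum>t<2 ^ (s * n). \<Sum>u<2 ^ s. \<Prod>i<Suc n. h i (blk s i (u + 2 ^ s * t)))"
    by (subst sum_lessThan_mult[symmetric]) (simp add: power_add mult.commute)
  also have "\<dots> = (\<Sum>t<2 ^ (s * n). \<Sum>u<2 ^ s. h 0 u * (\<Prod>i<n. h (Suc i) (blk s i t)))"
    by (intro sum.cong refl, subst prod.lessThan_Suc_shift) (simp add: blk)
  also have "\<dots> = (\<Sum>u<2 ^ s. h 0 u) * (\<Sum>t<2 ^ (s * n). \<Prod>i<n. h (Suc i) (blk s i t))"
    by (simp add: sum_distrib_left sum_distrib_right sum.swap[of _ "{..<2 ^ (s * n)}"])
  also have "\<dots> = (\<Prod>i<Suc n. \<Sum>u<2 ^ s. h i u)"
    using Suc.IH[of "\<lambda>i. h (Suc i)"] by (simp add: prod.lessThan_Suc_shift del: prod.lessThan_Suc)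
  finally show ?case .
qed simp

lemma sum_lessThan_even_odd: "(\<Sum>u<2 * M. f u) = (\<Sum>v<M. f (2 * v)) + (\<Sum>v<M. f (2 * v + 1))" for M :: nat
  by (induction M) (simp_all add: algebra_simps)

lemma cond_amp_branches_orthonormal:
  assumes "d \<le> 2 ^ k" "(\<Sum>j<d. (cmod (\<psi> j))\<^sup>2) = 1"
  shows "(\<Sum>u<2 ^ Suc k. cond_amp d \<psi> u * cnj (cond_amp d \<psi> u) * of_bool (odd u = P) * of_bool (odd u = Q))
    = of_bool (P = Q)"
proof -
  have "(\<Sum>v<2 ^ k. ext_vec d \<psi> v * cnj (ext_vec d \<psi> v)) = (\<Sum>v<d. \<psi> v * cnj (\<psi> v))"
    using assms(1) by (intro sum.mono_neutral_cong_right) (auto simp: ext_vec_def)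
  also have "\<dots> = (\<Sum>v<d. complex_of_real ((cmod (\<psi> v))\<^sup>2))"
    by (simp only: complex_norm_square)
  also have "\<dots> = 1"
    by (simp only: of_real_sum[symmetric] assms(2) of_real_1)
  finally have odd_branch: "(\<Sum>v<2 ^ k. ext_vec d \<psi> v * cnj (ext_vec d \<psi> v)) = 1" .
  have "(\<Sum>u<2 ^ Suc k. cond_amp d \<psi> u * cnj (cond_amp d \<psi> u) * of_bool (odd u = P)) =
      (\<Sum>v<(2::nat) ^ k. of_bool (v = 0) * of_bool (\<not> P)) +
      (\<Sum>v<(2::nat) ^ k. ext_vec d \<psi> v * cnj (ext_vec d \<psi> v) * of_bool P)"
    by (subst power_Suc, subst sum_lessThan_even_odd) (simp add: cond_amp_def)
  also have "\<dots> = 1"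
    using odd_branch by (cases P) (simp_all flip: sum_distrib_right)
  finally have norm: "(\<Sum>u<2 ^ Suc k. cond_amp d \<psi> u * cnj (cond_amp d \<psi> u) * of_bool (odd u = P)) = 1" .
  show ?thesis
  proof (cases "P = Q")
    case True
    then show ?thesis
      using norm by (simp add: mult.assoc flip: of_bool_conj)
  next
    case False
    then have "cond_amp d \<psi> u * cnj (cond_amp d \<psi> u) * of_bool (odd u = P) * of_bool (odd u = Q) = 0" for u
      by (cases "odd u = P") auto
    then have "(\<Sum>u<2 ^ Suc k. cond_amp d \<psi> u * cnj (cond_amp d \<psi> u) * of_bool (odd u = P) *
        of_bool (odd u = Q)) = 0"
      by (simp only: sum.neutral_const)
    with False show ?thesis
      by simp
  qed
qed

lemma prod_threshold_indicators:
  assumes "A \<le> n" "B \<le> (n::nat)"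
  shows "(\<Prod>i<n. of_bool ((A \<le> i) = (B \<le> i)) :: complex) = of_bool (A = B)"
proof -
  have "(\<forall>i<n. (A \<le> i) = (B \<le> i)) \<longleftrightarrow> A = B"
  proof
    assume h: "\<forall>i<n. (A \<le> i) = (B \<le> i)"
    show "A = B"
    proof (rule ccontr)
      assume "A \<noteq> B"
      then have "min A B < n" "(A \<le> min A B) \<noteq> (B \<le> min A B)"
        using assms by (auto simp: min_def)
      with h show False
        by blast
    qed
  qed simp
  then show ?thesis
    by (simp add: prod_of_bool)
qed

lemma garbage_amp_orthonormal:
  assumes "d \<le> 2 ^ k" "(\<Sum>j<d. (cmod (\<psi> j))\<^sup>2) = 1" "A \<le> n" "B \<le> n"
  shows "(\<Sum>t<2 ^ (n * Suc k + n). garbage_amp n k d \<psi> A t * cnj (garbage_amp n k d \<psi> B t)) = of_bool (A = B)"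
proof -
  let ?N = "n * Suc k"
  let ?G = "\<lambda>A t. garbage_amp n k d \<psi> A t"
  define h where "h i u = cond_amp d \<psi> u * cnj (cond_amp d \<psi> u) *
    of_bool (odd u = (A \<le> i)) * of_bool (odd u = (B \<le> i))" for i u
  have "(\<Sum>t<2 ^ (?N + n). ?G A t * cnj (?G B t)) =
      (\<Sum>t'<2 ^ n. \<Sum>t<2 ^ ?N. ?G A (t + 2 ^ ?N * t') * cnj (?G B (t + 2 ^ ?N * t')))"
    by (subst sum_lessThan_mult[symmetric]) (simp add: power_add)
  also have "\<dots> = (\<Sum>t'<(2::nat) ^ n. of_bool (t' = 0) * (\<Sum>t<2 ^ ?N. ?G A t * cnj (?G B t)))"
    by (intro sum.cong refl) (simp add: garbage_amp_split sum_distrib_left del: mult_Suc_right)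
  also have "\<dots> = (\<Sum>t<2 ^ (Suc k * n). \<Prod>i<n. h i (blk (Suc k) i t))"
    by (simp add: garbage_amp_mult_cnj h_def mult.commute)
  also have "\<dots> = (\<Prod>i<n. \<Sum>u<2 ^ Suc k. h i u)"
    by (rule sum_prod_blk)
  also have "\<dots> = (\<Prod>i<n. of_bool ((A \<le> i) = (B \<le> i)))"
    by (simp only: h_def cond_amp_branches_orthonormal[OF assms(1,2)])
  also have "\<dots> = of_bool (A = B)"
    using assms(3,4) by (rule prod_threshold_indicators)
  finally show ?thesis .
qed

lemma odd_count_le: "odd_count n k a \<le> n"
  using card_mono[of "{..<n}" "{j. j < n \<and> odd (blk (Suc k) j a)}"] by (auto simp: odd_count_def)

lemma partial_trace_final_state:
  assumes "d \<le> 2 ^ k" "(\<Sum>j<d. (cmod (\<psi> j))\<^sup>2) = 1" "a < 2 ^ (n * Suc k)" "b < 2 ^ (n * Suc k)"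
  shows "(\<Sum>t<2 ^ (n * Suc k + n). final_state n k d \<psi> (a + 2 ^ (n * Suc k) * t) *
      cnj (final_state n k d \<psi> (b + 2 ^ (n * Suc k) * t))) =
    inv_sqrt2 ^ (2 * n) *
      (out_amp n k d \<psi> a * cnj (out_amp n k d \<psi> b) * of_bool (odd_count n k a = odd_count n k b))"
proof -
  let ?c = "\<lambda>a. inv_sqrt2 ^ n * out_amp n k d \<psi> a"
  let ?G = "\<lambda>a t. garbage_amp n k d \<psi> (odd_count n k a) t"
  have "(\<Sum>t<2 ^ (n * Suc k + n). final_state n k d \<psi> (a + 2 ^ (n * Suc k) * t) *
      cnj (final_state n k d \<psi> (b + 2 ^ (n * Suc k) * t))) =
      ?c a * cnj (?c b) * (\<Sum>t<2 ^ (n * Suc k + n). ?G a t * cnj (?G b t))"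
    unfolding final_state_split[OF assms(3)] final_state_split[OF assms(4)]
    by (simp add: sum_distrib_left mult_ac)
  also have "\<dots> = ?c a * cnj (?c b) * of_bool (odd_count n k a = odd_count n k b)"
    by (simp only: garbage_amp_orthonormal[OF assms(1,2) odd_count_le odd_count_le])
  also have "\<dots> = inv_sqrt2 ^ (2 * n) *
      (out_amp n k d \<psi> a * cnj (out_amp n k d \<psi> b) * of_bool (odd_count n k a = odd_count n k b))"
    by (simp add: power_add[symmetric] mult_2 mult_2_right mult_ac)
  finally show ?thesis .
qed


section \<open>The phase average\<close>

lemma integral_exp_int_multiple:
  fixes N :: int
  shows "integral {0..2 * pi} (\<lambda>\<theta>. exp (\<i> * of_real (of_int N * \<theta>))) = (if N = 0 then of_real (2 * pi) else 0)"
proof (cases "N = 0")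
  case True
  then show ?thesis
    by (simp add: scaleR_conv_of_real)
next
  case False
  have "exp (\<i> * of_int N * of_real (2 * pi)) = 1"
    using exp_integer_2pi[of "of_int N"] by (simp add: mult_ac)
  then have "integral {0..2 * pi} (\<lambda>\<theta>. exp (\<i> * of_int N * of_real \<theta>)) = 0"
    using False Kronecker_Approximation_Theorem.integral_exp[of "2 * pi" "\<i> * of_int N"] by simp
  then show ?thesis
    using False by (simp add: mult_ac)
qed

lemma exp_power_mult_cnj_power:
  "exp (\<i> * of_real \<theta>) ^ p * cnj (exp (\<i> * of_real \<theta>) ^ q) = exp (\<i> * of_real (of_int (int p - int q) * \<theta>))"
proof -
  let ?w = "\<i> * of_real \<theta>"
  have "cnj (exp ?w) = exp (- ?w)"
    by (simp add: exp_cnj)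
  then have "exp ?w ^ p * cnj (exp ?w ^ q) = exp ?w ^ p * exp (- ?w) ^ q"
    by (simp only: complex_cnj_power)
  also have "\<dots> = exp (of_nat p * ?w + of_nat q * (- ?w))"
    by (simp only: exp_of_nat_mult exp_add)
  also have "\<dots> = exp (\<i> * of_real (of_int (int p - int q) * \<theta>))"
    by (rule arg_cong[where f = exp]) (simp add: algebra_simps)
  finally show ?thesis .
qed

definition zero_count :: "nat \<Rightarrow> nat \<Rightarrow> nat \<Rightarrow> nat" where
  "zero_count n k a = card {j. j < n \<and> blk (Suc k) j a = 0}"

lemma cond_sample_eq_cond_amp:
  "cond_sample d \<psi> \<theta> c = cond_amp d \<psi> c * (if c = 0 then exp (\<i> * of_real \<theta>) else 1) * inv_sqrt2"
  by (cases "odd c"; cases "c = 0") (auto simp: cond_sample_def cond_amp_def inv_sqrt2_def elim: oddE)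

lemma prod_if_eq_power: "(\<Prod>i<(n::nat). if P i then e else 1) = e ^ card {i. i < n \<and> P i}"
proof -
  have "(\<Prod>i<n. if P i then e else 1) = (\<Prod>i\<in>{..<n} \<inter> {i. P i}. e) * (\<Prod>i\<in>{..<n} \<inter> - {i. P i}. 1)"
    by (rule prod.If_cases) simp
  also have "{..<n} \<inter> {i. P i} = {i. i < n \<and> P i}"
    by auto
  finally show ?thesis
    by simp
qed

lemma prod_cond_sample:
  "(\<Prod>i<n. cond_sample d \<psi> \<theta> (blk (Suc k) i a)) =
    inv_sqrt2 ^ n * out_amp n k d \<psi> a * exp (\<i> * of_real \<theta>) ^ zero_count n k a"
  unfolding cond_sample_eq_cond_amp prod.distrib prod_if_eq_power out_amp_def zero_count_def
  by (simp add: mult_ac)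

lemma target_state_eq:
  "target_state n d \<psi> a b = inv_sqrt2 ^ (2 * n) *
     (out_amp n (qbits d) d \<psi> a * cnj (out_amp n (qbits d) d \<psi> b) *
      of_bool (zero_count n (qbits d) a = zero_count n (qbits d) b))"
proof -
  define K where "K = inv_sqrt2 ^ (2 * n) * out_amp n (qbits d) d \<psi> a * cnj (out_amp n (qbits d) d \<psi> b)"
  define N where "N = int (zero_count n (qbits d) a) - int (zero_count n (qbits d) b)"
  have integrand: "(\<Prod>i<n. cond_sample d \<psi> \<theta> (blk (qbits d + 1) i a)) * cnj (\<Prod>i<n. cond_sample d \<psi> \<theta> (blk (qbits d + 1) i b))
      = K * exp (\<i> * of_real (of_int N * \<theta>))" for \<theta>
  proof -
    have "inv_sqrt2 ^ n * inv_sqrt2 ^ n = inv_sqrt2 ^ (2 * n)"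
      by (simp add: power_add[symmetric] mult_2)
    then show ?thesis
      unfolding Suc_eq_plus1[symmetric] prod_cond_sample complex_cnj_mult K_def N_def
        exp_power_mult_cnj_power[symmetric]
      by (simp add: mult_ac)
  qed
  have "target_state n d \<psi> a b = integral {0..2 * pi} (\<lambda>\<theta>. K * exp (\<i> * of_real (of_int N * \<theta>))) / of_real (2 * pi)"
    unfolding target_state_def integrand ..
  also have "\<dots> = K * of_bool (N = 0)"
    unfolding integral_mult_right integral_exp_int_multiple by simp
  finally show ?thesis
    by (simp add: K_def N_def)
qed

lemma zero_count_add_odd_count:
  assumes "out_amp n k d \<psi> a \<noteq> 0"
  shows "zero_count n k a + odd_count n k a = n"
proof -
  have "blk (Suc k) j a = 0 \<or> odd (blk (Suc k) j a)" if "j < n" for j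
  proof -
    have "cond_amp d \<psi> (blk (Suc k) j a) \<noteq> 0"
      using assms that by (auto simp: out_amp_def)
    then show ?thesis
      by (auto simp: cond_amp_def split: if_splits)
  qed
  then have "{j. j < n \<and> blk (Suc k) j a = 0} \<union> {j. j < n \<and> odd (blk (Suc k) j a)} = {..<n}"
    by auto
  moreover have "{j. j < n \<and> blk (Suc k) j a = 0} \<inter> {j. j < n \<and> odd (blk (Suc k) j a)} = {}"
    by auto
  ultimately show ?thesis
    unfolding zero_count_def odd_count_def by (metis card_Un_disjoint card_lessThan finite_Un finite_lessThan)
qed

lemma out_amp_odd_count_eq_zero_count:
  "out_amp n k d \<psi> a * cnj (out_amp n k d \<psi> b) * of_bool (odd_count n k a = odd_count n k b) =
   out_amp n k d \<psi> a * cnj (out_amp n k d \<psi> b) * of_bool (zero_count n k a = zero_count n k b)"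
proof (cases "out_amp n k d \<psi> a = 0 \<or> out_amp n k d \<psi> b = 0")
  case False
  then have "zero_count n k a + odd_count n k a = n" "zero_count n k b + odd_count n k b = n"
    using zero_count_add_odd_count by blast+
  then have "odd_count n k a = odd_count n k b \<longleftrightarrow> zero_count n k a = zero_count n k b"
    by auto
  then show ?thesis
    by simp
qed auto


section \<open>The sampling circuit\<close>

definition sampler_circuit :: "nat \<Rightarrow> nat \<Rightarrow> gate list" where
  "sampler_circuit n k = hadamard_circuit (ctrl_qubits n k) @ relayout_circuit n k @
     sorting_circuit n k @ uncompute_circuit n k"

lemma valid_sampler_circuit: "valid_circuit (sampler_qubits n k) (sampler_circuit n k)"
proof -
  have "0 < c \<and> c < sampler_qubits n k" if "c \<in> set (ctrl_qubits n k)" for c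
    using that by (cases n) (auto simp: set_ctrl_qubits sampler_qubits_def)
  then show ?thesis
    by (simp add: sampler_circuit_def valid_hadamard_circuit valid_relayout_circuit
        valid_sorting_circuit valid_uncompute_circuit)
qed

lemma run_sampler_circuit:
  assumes "x < 2 ^ sampler_qubits n k"
  shows "run_circuit (sampler_qubits n k) (sampler_circuit n k) (input_vec n k d \<psi>) x = final_state n k d \<psi> x"
proof -
  let ?m = "sampler_qubits n k"
  let ?run = "run_circuit ?m"
  define prepared where "prepared = ?run (relayout_circuit n k) (?run (hadamard_circuit (ctrl_qubits n k)) (input_vec n k d \<psi>))"
  have "\<forall>y<2 ^ ?m. prepared y = sorting_state n k d \<psi> 0 y"
    using classical_circuit_relayout[of n k]
    by (auto simp: prepared_def classical_circuit_def run_hadamard_ctrl_qubits sorting_state_initial)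
  then have sorted: "\<forall>y<2 ^ ?m. ?run (sorting_circuit n k) prepared y = sorting_state n k d \<psi> n y"
    by (rule run_sorting_circuit)
  have "?run (sampler_circuit n k) (input_vec n k d \<psi>) x = ?run (uncompute_circuit n k) (?run (sorting_circuit n k) prepared) x"
    by (simp add: sampler_circuit_def prepared_def run_circuit_append)
  also have "\<dots> = sorting_state n k d \<psi> n (uncompute n k n x)"
    using classical_circuit_uncompute[of n k] assms sorted by (simp add: classical_circuit_def)
  also have "\<dots> = final_state n k d \<psi> x"
    by (rule sorting_state_uncompute)
  finally show ?thesis .
qed

lemma length_sorting_circuit: "length (sorting_circuit n k) \<le> 18 * n * n * Suc k"
proof -
  have "length (concat (map (sort_step_circuit n k) [0..<i])) \<le> i * (18 * n * Suc k)" for i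
  proof (induction i)
    case (Suc i)
    have "9 * (2 * n - 1 - i) * Suc k \<le> 18 * n * Suc k"
      by (intro mult_le_mono1) simp
    then have "length (sort_step_circuit n k i) \<le> 18 * n * Suc k"
      by (simp add: sort_step_circuit_def length_crotate_blocks_circuit)
    with Suc show ?case
      by simp
  qed simp
  from this[of n] show ?thesis
    by (simp add: sorting_circuit_def mult_ac)
qed

lemma length_sampler_circuit: "1 \<le> n \<Longrightarrow> length (sampler_circuit n k) \<le> 22 * (n * n * Suc k)"
proof -
  assume "1 \<le> n"
  have "length (relayout_circuit n k) = n * k + n"
    by (simp add: relayout_circuit_def copy_swaps_circuit_def flip_flags_circuit_def length_concat
        swap_bits_circuit_def comp_def sum_list_triv)
  moreover have "n * 1 * 1 \<le> n * n * Suc k" "n * 1 * k \<le> n * n * Suc k"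
    using \<open>1 \<le> n\<close> by (intro mult_le_mono; simp)+
  ultimately show ?thesis
    using length_sorting_circuit[of n k]
    by (simp add: sampler_circuit_def hadamard_circuit_def ctrl_qubits_def uncompute_circuit_def)
qed

lemma qbits_le: "d \<le> 2 ^ qbits d"
  unfolding qbits_def by (rule LeastI[of _ d]) (simp add: less_imp_le)

lemma qbits_le_log: "1 \<le> d \<Longrightarrow> real (qbits d) \<le> log 2 (real d) + 1"
proof (cases "qbits d")
  case (Suc q)
  assume "1 \<le> d"
  have "\<not> d \<le> 2 ^ q"
    using Suc by (metis lessI not_less_Least qbits_def)
  then have "log 2 (2 ^ q) < log 2 (real d)"
    using \<open>1 \<le> d\<close> by (subst log_less_cancel_iff) auto
  then show ?thesis
    using Suc by simp
qed simp

lemma length_sampler_circuit_le_log: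
  assumes "1 \<le> n" "1 \<le> d"
  shows "real (length (sampler_circuit n (qbits d))) \<le> 44 * real n ^ 2 * (log 2 (real d) + 1)"
proof -
  have "real (length (sampler_circuit n (qbits d))) \<le> real (22 * (n * n * Suc (qbits d)))"
    using length_sampler_circuit[OF assms(1), of "qbits d"] by (simp only: of_nat_le_iff)
  also have "\<dots> = 22 * (real n * real n * (real (qbits d) + 1))"
    by (simp add: algebra_simps)
  also have "\<dots> \<le> 22 * (real n * real n * (2 * (log 2 (real d) + 1)))"
  proof -
    have "0 \<le> log 2 (real d)"
      using assms(2) by simp
    then show ?thesis
      using qbits_le_log[OF assms(2)] by (intro mult_left_mono) auto
  qed
  finally show ?thesis
    by (simp add: power2_eq_square algebra_simps)
qed

lemma input_state_eq_outer_product: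
  "(\<lambda>x y. if x < 2 ^ (n * qbits d) \<and> y < 2 ^ (n * qbits d) then input_state n d \<psi> x y else 0) =
   (\<lambda>x y. input_vec n (qbits d) d \<psi> x * cnj (input_vec n (qbits d) d \<psi> y))"
  by (auto simp: input_state_def input_vec_def intro!: ext)

lemma circuit_channel_sampler_circuit:
  assumes "(\<Sum>j<d. (cmod (\<psi> j))\<^sup>2) = 1" "a < 2 ^ (n * Suc (qbits d))" "b < 2 ^ (n * Suc (qbits d))"
  shows "circuit_channel (sampler_qubits n (qbits d)) (sampler_circuit n (qbits d)) (n * qbits d) (n * Suc (qbits d))
    (input_state n d \<psi>) a b = target_state n d \<psi> a b"
proof -
  let ?k = "qbits d"
  let ?N = "n * Suc ?k"
  let ?run = "run_circuit (sampler_qubits n ?k) (sampler_circuit n ?k) (input_vec n ?k d \<psi>)"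
  have "?run (c + 2 ^ ?N * t) = final_state n ?k d \<psi> (c + 2 ^ ?N * t)" if "c < 2 ^ ?N" "t < 2 ^ (?N + n)" for c t
  proof (rule run_sampler_circuit)
    have "c + 2 ^ ?N * t < 2 ^ ?N * Suc t"
      using that(1) by simp
    also have "\<dots> \<le> 2 ^ ?N * 2 ^ (?N + n)"
      using that(2) by (intro mult_le_mono2) simp
    also have "\<dots> = 2 ^ sampler_qubits n ?k"
      by (simp add: sampler_qubits_def algebra_simps flip: power_add)
    finally show "c + 2 ^ ?N * t < 2 ^ sampler_qubits n ?k" .
  qed
  note run = this
  have "sampler_qubits n ?k - ?N = ?N + n"
    by (simp add: sampler_qubits_def)
  then have "circuit_channel (sampler_qubits n ?k) (sampler_circuit n ?k) (n * ?k) ?N (input_state n d \<psi>) a b =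
      (\<Sum>t<2 ^ (?N + n). ?run (a + 2 ^ ?N * t) * cnj (?run (b + 2 ^ ?N * t)))"
    unfolding circuit_channel_def Let_def input_state_eq_outer_product evolve_outer_product by simp
  also have "\<dots> = (\<Sum>t<2 ^ (?N + n). final_state n ?k d \<psi> (a + 2 ^ ?N * t) * cnj (final_state n ?k d \<psi> (b + 2 ^ ?N * t)))"
    using assms(2,3) by (intro sum.cong refl) (simp add: run del: mult_Suc_right)
  also have "\<dots> = target_state n d \<psi> a b"
    unfolding partial_trace_final_state[OF qbits_le assms] out_amp_odd_count_eq_zero_count target_state_eq ..
  finally show ?thesis .
qed

theorem lemma2p2:
  "\<exists>C::real. \<forall>n d::nat. n \<ge> 1 \<longrightarrow> d \<ge> 1 \<longrightarrow>
     (\<exists>m gs.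
        n * (qbits d + 1) \<le> m \<and>
        (\<forall>g\<in>set gs. valid_gate m g) \<and>
        real (length gs) \<le> C * real n ^ 2 * (log 2 (real d) + 1) \<and>
        (\<forall>\<psi> :: nat \<Rightarrow> complex. (\<Sum>j<d. (cmod (\<psi> j))\<^sup>2) = 1 \<longrightarrow>
           (\<forall>a < 2 ^ (n * (qbits d + 1)). \<forall>b < 2 ^ (n * (qbits d + 1)).
              circuit_channel m gs (n * qbits d) (n * (qbits d + 1)) (input_state n d \<psi>) a b
              = target_state n d \<psi> a b)))"
  apply (intro exI[of _ "44::real"] allI impI)
  subgoal for n d
    using valid_sampler_circuit[of n "qbits d"] length_sampler_circuit_le_log[of n d]
      circuit_channel_sampler_circuit[where n = n and d = d]
    by (intro exI[of _ "sampler_qubits n (qbits d)"] exI[of _ "sampler_circuit n (qbits d)"])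
      (auto simp: valid_circuit_def sampler_qubits_def)
  done

end
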